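(* Assume the joint regression model (M), the regularity conditions (A-1), (A-2), (A-3), and that for some constant $d_0>0$ and for all $\theta\in\bar U_{d_0}(\theta_0)$ the following moments are finite (all suprema over $\tau,\tilde\tau\in\bar U_{d_0}(\theta_0)$): $\mathbb{E}[\|X\|^3(\sup_\tau G_1^{(1)}(X'\tau^q))(\sup_{\tilde\tau}G_1^{(2)}(X'\tilde\tau^q))]$, $\mathbb{E}[\|X\|^3(\sup_\tau G_1^{(1)}(X'\tau^q))(\sup_{\tilde\tau}G_2^{(1)}(X'\tilde\tau^e))]$, $\mathbb{E}[\|X\|^3(\sup_\tau G_2(X'\tau^e))(\sup_{\tilde\tau}G_1^{(2)}(X'\tilde\tau^q))]$, $\mathbb{E}[\|X\|^3(\sup_\tau G_2(X'\tau^e))(\sup_{\tilde\tau}G_2^{(1)}(X'\tilde\tau^e))]$, $\mathbb{E}[\|X\|^3\sup_\tau(G_1^{(1)}(X'\tau^q))^2]$, $\mathbb{E}[\|X\|^3\sup_\tau(G_2(X'\tau^e))^2]$, $\mathbb{E}[\|X\|^3\sup_\tau G_1^{(1)}(X'\tau^q)G_2(X'\tau^e)]$, $\mathbb{E}[\|X\|^5(\sup_\tau G_2^{(1)}(X'\tau^e))(\sup_{\tilde\tau}G_2^{(2)}(X'\tilde\tau^e))]$, $\mathbb{E}[\|X\|^5(\sup_\tau G_2^{(1)}(X'\tau^e))^2]$, $\mathbb{E}[\|X\|^4(\sup_\tau G_2^{(1)}(X'\tau^e))(\sup_{\tilde\tau}G_2^{(2)}(X'\tilde\tau^e))\mathbb{E}[|Y|\mid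 X]]$, $\mathbb{E}[\|X\|^3G_2^{(1)}(X'\theta^e)(\sup_\tau G_2^{(1)}(X'\tau^e))\mathbb{E}[|Y|\mid X]]$, $\mathbb{E}[\|X\|^3G_2^{(1)}(X'\theta^e)(\sup_\tau G_2^{(2)}(X'\tau^e))\mathbb{E}[Y^2\mid X]]$, $\mathbb{E}[\|X\|^3(\sup_\tau G_2^{(1)}(X'\tau^e))(\sup_{\tilde\tau}G_2^{(2)}(X'\tilde\tau^e))\mathbb{E}[Y^2\mid X]]$. Let $\lambda(\theta)=\mathbb{E}[\psi(Y,X,\theta)]$. Then there are strictly positive numbers $a,d_0$ such that $\|\lambda(\theta)\|\ge a\cdot\|\theta-\theta_0\|$ for all $\theta\in\Theta$ with $\|\theta-\theta_0\|\le d_0$.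
   Context: Fix $\alpha\in(0,1)$ and $k\in\mathbb{N}$. Let $(\Omega,\mathcal F,P)$ be a complete probability space and $Y:\Omega\to\mathbb{R}$, $X:\Omega\to\mathbb{R}^k$ random variables. For a real random variable $Z$ with distribution function $F$, $Q_\alpha(Z)=\inf\{z\in\mathbb{R}:F(z)\ge\alpha\}$ and $\mathrm{ES}_\alpha(Z)=\frac1\alpha\int_0^\alpha Q_u(Z)\,\mathrm{d}u$; $Q_\alpha(\cdot\mid X)$ and $\mathrm{ES}_\alpha(\cdot\mid X)$ denote these functionals of the conditional distribution given $X$. $F_{Y|X}$ and $f_{Y|X}$ denote the conditional distribution function and density of $Y$ given $X$. Vectors $\theta\in\mathbb{R}^{2k}$ are written $\theta=(\theta^{q\prime},\theta^{e\prime})'$ with $\theta^q,\theta^e\in\mathbb{R}^k$. $\|\cdot\|$ is the maximum norm on vectors. $\bar U_d(\theta)=\{\tau\in\Theta:\|\tau-\theta\|\le d\}$. $G^{(j)}$ denotes the $j$-th derivative of a real function $G$. Model (M): $Y=X'\theta^q_0+u^q$ and $Y=X'\theta^e_0+u^e$ where $Q_\alpha(u^q\mid X)=0$ and $\mathrm{ES}_\alpha(u^e\mid X)=0$; $\theta_0=(\theta_0^{q\prime},\theta_0^{e\prime})'\in\Theta$, where $\Theta\subset\mathbb{R}^{2k}$ is compact with nonempty interior. (A-1): $(Y_i,X_i)$, $i=1,\dots,n$, are iid with the distribution of $(Y,X)$; the conditional distribution $F_{Y|X}$ has finite second moments and is absolutely continuous with density $f_{Y|X}$ that is strictly positive, continuous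 and bounded in a neighbourhood of $X'\theta^q_0$. (A-2): $\mathbb{E}[XX']$ is positive definite. (A-3): $G_1$ is twice continuously differentiable, increasing and integrable; $\mathcal G_2$ is three times continuously differentiable with $\mathcal G_2^{(1)}=G_2$, and $G_2$ and $G_2^{(1)}$ are strictly positive; $a$ is integrable. The estimating function is $\psi=(\psi_1',\psi_2')'$ with $\psi_1(Y,X,\theta)=\frac1\alpha(\mathbf 1_{\{Y\le X'\theta^q\}}-\alpha)\big(\alpha XG_1^{(1)}(X'\theta^q)+XG_2(X'\theta^e)\big)$ and $\psi_2(Y,X,\theta)=XG_2^{(1)}(X'\theta^e)\big(X'\theta^e-X'\theta^q+\frac1\alpha(X'\theta^q-Y)\mathbf 1_{\{Y\le X'\theta^q\}}\big)$. *)

theory Defs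
  imports "HOL-Probability.Probability"
begin

definition maxnorm :: "real^'k \<Rightarrow> real" where
  "maxnorm v = Max (range (\<lambda>i. \<bar>v $ i\<bar>))"

definition maxnorm2 :: "(real^'k) \<times> (real^'k) \<Rightarrow> real" where
  "maxnorm2 p = max (maxnorm (fst p)) (maxnorm (snd p))"

definition Ubar :: "((real^'k) \<times> (real^'k)) set \<Rightarrow> real \<Rightarrow> (real^'k) \<times> (real^'k)
    \<Rightarrow> ((real^'k) \<times> (real^'k)) set" where
  "Ubar Th d th = {\<tau>\<in>Th. maxnorm2 (\<tau> - th) \<le> d}"

definition quantile :: "(real \<Rightarrow> real) \<Rightarrow> real \<Rightarrow> real" where
  "quantile F u = Inf {z. u \<le> F z}"

definition expected_shortfall :: "(real \<Rightarrow> real) \<Rightarrow> real \<Rightarrow> real" where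
  "expected_shortfall F \<alpha> = (1 / \<alpha>) * (LBINT u=0..\<alpha>. quantile F u)"

definition cond_cdf :: "(real^'k \<Rightarrow> real \<Rightarrow> real) \<Rightarrow> real^'k \<Rightarrow> real \<Rightarrow> real" where
  "cond_cdf f x z = (LINT y:{..z}|lborel. f x y)"

text \<open>\<open>f\<close> is a conditional density of \<open>Y\<close> given \<open>X\<close>: the joint law of \<open>(X,Y)\<close>
  has density \<open>f\<close> w.r.t. (law of \<open>X\<close>) \<open>\<otimes>\<close> Lebesgue measure.\<close>
definition is_cond_density :: "'a measure \<Rightarrow> ('a \<Rightarrow> real^'k) \<Rightarrow> ('a \<Rightarrow> real)
    \<Rightarrow> (real^'k \<Rightarrow> real \<Rightarrow> real) \<Rightarrow> bool" where
  "is_cond_density M X Y f \<longleftrightarrow>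
     (\<lambda>(x, y). f x y) \<in> borel_measurable (borel \<Otimes>\<^sub>M borel) \<and> (\<forall>x y. 0 \<le> f x y) \<and>
     distr M (borel \<Otimes>\<^sub>M borel) (\<lambda>\<omega>. (X \<omega>, Y \<omega>))
       = density (distr M borel X \<Otimes>\<^sub>M lborel) (\<lambda>(x, y). ennreal (f x y))"

definition pos_def :: "real^'k^'k \<Rightarrow> bool" where
  "pos_def A \<longleftrightarrow> (\<forall>v. v \<noteq> 0 \<longrightarrow> 0 < v \<bullet> (A *v v))"

text \<open>The estimating function \<open>\<psi> = (\<psi>\<^sub>1, \<psi>\<^sub>2)\<close>; \<open>G1d = G\<^sub>1\<^sup>(\<^sup>1\<^sup>)\<close>,
  \<open>G2d = G\<^sub>2\<^sup>(\<^sup>1\<^sup>)\<close>.\<close>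
definition psi1 :: "real \<Rightarrow> (real \<Rightarrow> real) \<Rightarrow> (real \<Rightarrow> real) \<Rightarrow> real \<Rightarrow> real^'k
    \<Rightarrow> (real^'k) \<times> (real^'k) \<Rightarrow> real^'k" where
  "psi1 \<alpha> G1d G2 y x th =
     ((1 / \<alpha>) * ((if y \<le> x \<bullet> fst th then 1 else 0) - \<alpha>)
       * (\<alpha> * G1d (x \<bullet> fst th) + G2 (x \<bullet> snd th))) *\<^sub>R x"

definition psi2 :: "real \<Rightarrow> (real \<Rightarrow> real) \<Rightarrow> real \<Rightarrow> real^'k
    \<Rightarrow> (real^'k) \<times> (real^'k) \<Rightarrow> real^'k" where
  "psi2 \<alpha> G2d y x th =
     (G2d (x \<bullet> snd th) * (x \<bullet> snd th - x \<bullet> fst th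
        + (1 / \<alpha>) * (x \<bullet> fst th - y) * (if y \<le> x \<bullet> fst th then 1 else 0))) *\<^sub>R x"

end

theory Submission
  imports Defs
begin

(* Write u and v for the quantile and expected-shortfall parts of theta - theta0.
   Conditioning on X, the model identities F(X'theta0^q | X) = alpha and
   E[(X'theta0^q - Y)_+ | X] = alpha (X'theta0^q - X'theta0^e) turn the pairing
   u'lambda_1(theta) + v'lambda_2(theta) into
     E[(alpha G1'(X'theta^q) + G2(X'theta^e)) / alpha * X'u (F(X'theta^q | X) - F(X'theta0^q | X))]
       + E[G2'(X'theta^e) (X'v)^2] + E[G2'(X'theta^e) X'v R].
   The first two terms are nonnegative, and the remainder R is bounded by
   |X'u| |F(X'theta^q | X) - F(X'theta0^q | X)| / alpha, so that by dominated convergence the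
   third term is o(|theta - theta0|^2). If the pairing were o(|theta - theta0|^2) along a
   sequence theta_n -> theta0, the directions (theta_n - theta0) / |theta_n - theta0| would
   have a limit point l with |l| = 1; Fatou's lemma, together with the positivity of the
   conditional density at the quantile and of G2 and G2', forces X'l = 0 almost surely,
   contradicting the positive definiteness of E[XX']. Hence the pairing is at least
   c |theta - theta0|^2 near theta0, whereas it is at most 2k |theta - theta0| |lambda(theta)|. *)

section \<open>The maximum norm\<close>

lemma abs_component_le_maxnorm: "\<bar>v $ i\<bar> \<le> maxnorm v"
  unfolding maxnorm_def by (rule Max_ge) auto

lemma maxnorm_le_iff: "maxnorm v \<le> c \<longleftrightarrow> (\<forall>i. \<bar>v $ i\<bar> \<le> c)"
  unfolding maxnorm_def by (subst Max_le_iff) auto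

lemma maxnorm_nonneg: "0 \<le> maxnorm v"
  using abs_component_le_maxnorm[of v undefined] by linarith

lemma maxnorm_zero [simp]: "maxnorm 0 = 0"
  by (intro antisym) (simp_all add: maxnorm_le_iff maxnorm_nonneg)

lemma maxnorm_le_norm: "maxnorm v \<le> norm v"
  unfolding maxnorm_le_iff by (simp add: component_le_norm_cart)

lemma norm_le_card_maxnorm: "norm (v :: real^'k) \<le> CARD('k) * maxnorm v"
proof -
  have "norm v \<le> (\<Sum>i\<in>UNIV. \<bar>v $ i\<bar>)" by (rule norm_le_l1_cart)
  also have "\<dots> \<le> (\<Sum>i\<in>(UNIV::'k set). maxnorm v)" by (intro sum_mono abs_component_le_maxnorm)
  finally show ?thesis by simp
qed

lemma borel_measurable_maxnorm [measurable]: "maxnorm \<in> borel_measurable borel"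
  unfolding maxnorm_def[abs_def] by measurable

lemma maxnorm_scaleR: "maxnorm (c *\<^sub>R v) = \<bar>c\<bar> * maxnorm v"
proof (rule antisym)
  show "maxnorm (c *\<^sub>R v) \<le> \<bar>c\<bar> * maxnorm v"
    unfolding maxnorm_le_iff
    by (auto simp: abs_mult intro: mult_left_mono abs_component_le_maxnorm)
  show "\<bar>c\<bar> * maxnorm v \<le> maxnorm (c *\<^sub>R v)"
  proof (cases "c = 0")
    case False
    have "maxnorm v \<le> maxnorm (c *\<^sub>R v) / \<bar>c\<bar>"
      unfolding maxnorm_le_iff using abs_component_le_maxnorm[of "c *\<^sub>R v"] False
      by (auto simp: abs_mult field_simps)
    then show ?thesis using False by (simp add: field_simps)
  qed (simp add: maxnorm_nonneg)
qed

lemma abs_inner_le_maxnorm: "\<bar>u \<bullet> (w::real^'k)\<bar> \<le> CARD('k) * maxnorm u * maxnorm w"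
proof -
  have "\<bar>u \<bullet> w\<bar> \<le> (\<Sum>i\<in>UNIV. \<bar>u $ i * w $ i\<bar>)"
    unfolding inner_vec_def by (simp add: sum_abs)
  also have "\<dots> \<le> (\<Sum>i\<in>(UNIV::'k set). maxnorm u * maxnorm w)"
    by (intro sum_mono) (auto simp: abs_mult intro!: mult_mono abs_component_le_maxnorm maxnorm_nonneg)
  finally show ?thesis by simp
qed

lemma abs_inner_le_maxnorm_bound:
  "maxnorm w \<le> R \<Longrightarrow> \<bar>x \<bullet> (w::real^'k)\<bar> \<le> CARD('k) * maxnorm x * R"
  by (rule order_trans[OF abs_inner_le_maxnorm]) (simp add: mult_left_mono maxnorm_nonneg)

lemma maxnorm2_fst: "maxnorm (fst p) \<le> maxnorm2 p"
  and maxnorm2_snd: "maxnorm (snd p) \<le> maxnorm2 p"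
  by (auto simp: maxnorm2_def)

lemma maxnorm2_nonneg: "0 \<le> maxnorm2 p"
  using maxnorm2_fst[of p] maxnorm_nonneg[of "fst p"] by linarith

lemma maxnorm2_scaleR: "maxnorm2 (c *\<^sub>R p) = \<bar>c\<bar> * maxnorm2 p"
  by (simp add: maxnorm2_def maxnorm_scaleR max_mult_distrib_left)

lemma maxnorm2_le_norm: "maxnorm2 p \<le> norm p"
  unfolding maxnorm2_def
  by (metis max.bounded_iff maxnorm_le_norm norm_fst_le norm_snd_le order_trans prod.collapse)

lemma norm_le_card_maxnorm2: "norm (p :: (real^'k) \<times> (real^'k)) \<le> 2 * CARD('k) * maxnorm2 p"
proof -
  have "norm p \<le> norm (fst p) + norm (snd p)" using norm_Pair_le[of "fst p" "snd p"] by simp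
  also have "\<dots> \<le> CARD('k) * maxnorm2 p + CARD('k) * maxnorm2 p"
    by (intro add_mono order_trans[OF norm_le_card_maxnorm] mult_left_mono maxnorm2_fst maxnorm2_snd) auto
  finally show ?thesis by (simp add: algebra_simps)
qed

section \<open>Distribution function and lower partial moment of a density\<close>

definition cdf_of_density :: "(real \<Rightarrow> real) \<Rightarrow> real \<Rightarrow> real" where
  "cdf_of_density p t = (LINT y:{..t}|lborel. p y)"

definition lower_partial_moment :: "(real \<Rightarrow> real) \<Rightarrow> real \<Rightarrow> real" where
  "lower_partial_moment p t = (LINT y|lborel. p y * ((t - y) * indicator {..t} y))"

lemma cond_cdf_eq_cdf_of_density: "cond_cdf f x = cdf_of_density (f x)"
  by (simp add: fun_eq_iff cond_cdf_def cdf_of_density_def)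

locale real_density =
  fixes p :: "real \<Rightarrow> real"
  assumes borel_measurable_p [measurable]: "p \<in> borel_measurable borel"
    and p_nonneg: "\<And>y. 0 \<le> p y"
    and integrable_p: "integrable lborel p"
    and integral_p: "integral\<^sup>L lborel p = 1"
begin

abbreviation "F \<equiv> cdf_of_density p"

lemma integrable_p_indicator: "A \<in> sets borel \<Longrightarrow> integrable lborel (\<lambda>y. p y * indicator A y)"
  using integrable_mult_indicator[OF _ integrable_p, of A] by (simp add: mult.commute)

lemma F_eq_integral: "F t = (LINT y|lborel. p y * indicator {..t} y)"
  unfolding cdf_of_density_def set_lebesgue_integral_def by (simp add: mult.commute)

lemma real_distribution_density: "real_distribution (density lborel p)"
proof -
  have "emeasure (density lborel p) UNIV = (\<integral>\<^sup>+ y. ennreal (p y) \<partial>lborel)"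
    by (subst emeasure_density) auto
  also have "\<dots> = 1"
    using nn_integral_eq_integral[OF integrable_p] p_nonneg integral_p by simp
  finally show ?thesis
    by (intro real_distribution.intro prob_spaceI real_distribution_axioms.intro) auto
qed

interpretation D: real_distribution "density lborel p"
  by (rule real_distribution_density)

lemma F_eq_cdf: "F = cdf (density lborel p)"
proof
  fix t
  have "emeasure (density lborel p) {..t} = (\<integral>\<^sup>+ y. ennreal (p y * indicator {..t} y) \<partial>lborel)"
    by (subst emeasure_density) (auto intro!: nn_integral_cong split: split_indicator)
  also have "\<dots> = ennreal (F t)"
    unfolding F_eq_integral
    by (rule nn_integral_eq_integral) (auto intro: integrable_p_indicator simp: p_nonneg)
  finally show "F t = cdf (density lborel p) t"
    by (simp add: cdf_def measure_def integral_nonneg_AE p_nonneg F_eq_integral)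
qed

lemma F_mono: "a \<le> b \<Longrightarrow> F a \<le> F b"
  by (simp add: F_eq_cdf D.cdf_nondecreasing)

lemma F_nonneg: "0 \<le> F t"
  by (simp add: F_eq_cdf D.cdf_nonneg)

lemma F_le_1: "F t \<le> 1"
  by (simp add: F_eq_cdf D.cdf_bounded_prob)

lemma isCont_F: "isCont F t"
proof -
  have "emeasure (density lborel p) {t} = (\<integral>\<^sup>+ y. ennreal (p y) * indicator {t} y \<partial>lborel)"
    by (subst emeasure_density) auto
  also have "\<dots> = 0"
    by (subst nn_integral_0_iff_AE) (use AE_lborel_singleton[of t] in \<open>auto elim!: eventually_mono\<close>)
  finally show ?thesis
    by (simp add: F_eq_cdf D.isCont_cdf measure_def)
qed

lemma borel_measurable_F [measurable]: "F \<in> borel_measurable borel"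
  by (intro borel_measurable_continuous_onI continuous_at_imp_continuous_on ballI isCont_F)

lemma F_diff_ge:
  assumes "a \<le> b" and "\<And>y. a < y \<Longrightarrow> y \<le> b \<Longrightarrow> c \<le> p y"
  shows "c * (b - a) \<le> F b - F a"
proof -
  have "c * (b - a) = (LINT y|lborel. c * indicator {a<..b} y)"
    using assms(1) by simp
  also have "\<dots> \<le> (LINT y|lborel. p y * indicator {..b} y - p y * indicator {..a} y)"
    using assms
    by (intro integral_mono integrable_p_indicator Bochner_Integration.integrable_diff
        integrable_mult_right integrable_real_indicator) (auto simp: indicator_def)
  also have "\<dots> = F b - F a"
    unfolding F_eq_integral by (intro Bochner_Integration.integral_diff integrable_p_indicator) auto
  finally show ?thesis .
qed

lemma quantile_le_iff:
  assumes u: "0 < u" "u < 1"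
  shows "quantile F u \<le> s \<longleftrightarrow> u \<le> F s"
proof
  have "eventually (\<lambda>z. u < F z) at_top"
    using order_tendstoD(1)[OF D.cdf_lim_at_top_prob u(2)] by (simp add: F_eq_cdf)
  then have nonempty: "{z. u \<le> F z} \<noteq> {}"
    by (metis (mono_tags) empty_Collect_eq eventually_at_top_linorder less_imp_le order_refl)
  have "eventually (\<lambda>z. F z < u) at_bot"
    using order_tendstoD(2)[OF D.cdf_lim_at_bot u(1)] by (simp add: F_eq_cdf)
  then obtain b where "\<And>z. z \<le> b \<Longrightarrow> F z < u" by (metis eventually_at_bot_linorder)
  then have bdd: "bdd_below {z. u \<le> F z}"
    by (metis (mono_tags) bdd_belowI linorder_not_less mem_Collect_eq nle_le)
  show "u \<le> F s" if "quantile F u \<le> s"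
  proof -
    define q where "q = quantile F u"
    have "u \<le> F z" if "q < z" for z
    proof -
      obtain w where "u \<le> F w" "w < z"
        using \<open>q < z\<close> cInf_less_iff[OF nonempty bdd] by (auto simp: q_def quantile_def)
      then show ?thesis using F_mono[of w z] by auto
    qed
    then have "eventually (\<lambda>z. u \<le> F z) (at_right q)"
      by (auto intro: eventually_at_rightI[of q "q + 1"])
    moreover have "(F \<longlongrightarrow> F q) (at_right q)"
      using isCont_F[of q] by (simp add: isCont_def filterlim_at_split)
    ultimately have "u \<le> F q"
      by (intro tendsto_lowerbound) auto
    then show ?thesis using F_mono[of q s] that by (simp add: q_def)
  qed
  show "quantile F u \<le> s" if "u \<le> F s"
    unfolding quantile_def using that by (intro cInf_lower bdd) auto
qed

lemma F_quantile:
  assumes u: "0 < u" "u < 1"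
  shows "F (quantile F u) = u"
proof -
  define q where "q = quantile F u"
  have "F z \<le> u" if "z < q" for z
    using quantile_le_iff[OF u, of z] that by (auto simp: q_def)
  then have "eventually (\<lambda>z. F z \<le> u) (at_left q)"
    by (auto intro: eventually_at_leftI[of "q - 1"])
  moreover have "(F \<longlongrightarrow> F q) (at_left q)"
    using isCont_F[of q] by (simp add: isCont_def filterlim_at_split)
  ultimately have "F q \<le> u"
    by (intro tendsto_upperbound) auto
  moreover have "u \<le> F q" using quantile_le_iff[OF u, of q] by (simp add: q_def)
  ultimately show ?thesis by (simp add: q_def)
qed

lemma F_increment_quadratic_lower_bound:
  assumes "isCont p q" and "0 < p q"
  shows "\<exists>c>0. \<exists>e>0. \<forall>s. \<bar>s\<bar> \<le> e \<longrightarrow> c * s\<^sup>2 \<le> s * (F (q + s) - F q)"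
proof -
  have "eventually (\<lambda>y. dist (p y) (p q) < p q / 2) (at q)"
    using tendstoD[OF assms(1)[unfolded isCont_def], of "p q / 2"] assms(2) by simp
  then obtain d where "d > 0" and d_close: "\<And>y. y \<noteq> q \<Longrightarrow> dist y q < d \<Longrightarrow> dist (p y) (p q) < p q / 2"
    unfolding eventually_at by blast
  have d: "\<And>y. \<bar>y - q\<bar> < d \<Longrightarrow> p q / 2 \<le> p y"
  proof -
    fix y assume y: "\<bar>y - q\<bar> < d"
    show "p q / 2 \<le> p y"
    proof (cases "y = q")
      case False
      then have "\<bar>p y - p q\<bar> < p q / 2" using d_close[of y] y by (simp add: dist_real_def)
      then show ?thesis by linarith
    qed (use assms(2) in simp)
  qed
  have "p q / 2 * s\<^sup>2 \<le> s * (F (q + s) - F q)" if s: "\<bar>s\<bar> \<le> d / 2" for s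
  proof (cases "0 \<le> s")
    case True
    have "p q / 2 * (q + s - q) \<le> F (q + s) - F q"
      using s True \<open>d > 0\<close> by (intro F_diff_ge d) auto
    then have "s * (p q / 2 * s) \<le> s * (F (q + s) - F q)"
      using True by (intro mult_left_mono) auto
    then show ?thesis by (simp add: power2_eq_square algebra_simps)
  next
    case False
    have "p q / 2 * (q - (q + s)) \<le> F q - F (q + s)"
      using s False \<open>d > 0\<close> by (intro F_diff_ge d) auto
    then have "(- s) * (p q / 2 * (- s)) \<le> (- s) * (F q - F (q + s))"
      using False by (intro mult_left_mono) auto
    then show ?thesis by (simp add: power2_eq_square algebra_simps)
  qed
  moreover have "0 < p q / 2" "0 < d / 2" using assms \<open>d > 0\<close> by auto
  ultimately show ?thesis by blast
qed

end

locale real_density_first_moment = real_density +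
  assumes integrable_first_moment: "integrable lborel (\<lambda>y. y * p y)"
begin

abbreviation "H \<equiv> lower_partial_moment p"

lemma integrable_lower_partial_moment_integrand:
  "integrable lborel (\<lambda>y. p y * ((t - y) * indicator {..t} y))"
proof (rule Bochner_Integration.integrable_bound)
  show "integrable lborel (\<lambda>y. \<bar>t\<bar> * p y + \<bar>y * p y\<bar>)"
    using integrable_p integrable_first_moment by auto
  show "AE y in lborel. norm (p y * ((t - y) * indicator {..t} y)) \<le> norm (\<bar>t\<bar> * p y + \<bar>y * p y\<bar>)"
  proof (intro AE_I2)
    fix y
    have "\<bar>p y * ((t - y) * indicator {..t} y)\<bar> \<le> p y * (\<bar>t\<bar> + \<bar>y\<bar>)"
      using p_nonneg[of y] by (auto simp: indicator_def abs_mult intro!: mult_left_mono)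
    then show "norm (p y * ((t - y) * indicator {..t} y)) \<le> norm (\<bar>t\<bar> * p y + \<bar>y * p y\<bar>)"
      using p_nonneg[of y] by (simp add: abs_mult algebra_simps)
  qed
qed auto

lemma H_nonneg: "0 \<le> H t"
  unfolding lower_partial_moment_def
  by (rule integral_nonneg_AE) (auto intro!: mult_nonneg_nonneg p_nonneg simp: indicator_def)

lemma H_diff_bounds:
  assumes "a \<le> b"
  shows "(b - a) * F a \<le> H b - H a" and "H b - H a \<le> (b - a) * F b"
proof -
  have diff: "H b - H a = (LINT y|lborel. p y * ((b - y) * indicator {..b} y) - p y * ((a - y) * indicator {..a} y))"
    unfolding lower_partial_moment_def
    by (intro Bochner_Integration.integral_diff[symmetric] integrable_lower_partial_moment_integrand)
  have "(b - a) * F a = (LINT y|lborel. (b - a) * (p y * indicator {..a} y))"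
    unfolding F_eq_integral by simp
  also have "\<dots> \<le> H b - H a"
    unfolding diff using assms p_nonneg
    by (intro integral_mono integrable_mult_right integrable_p_indicator Bochner_Integration.integrable_diff
        integrable_lower_partial_moment_integrand)
      (auto simp: indicator_def algebra_simps intro: mult_right_mono)
  finally show "(b - a) * F a \<le> H b - H a" .
  have "H b - H a \<le> (LINT y|lborel. (b - a) * (p y * indicator {..b} y))"
    unfolding diff using assms p_nonneg
    by (intro integral_mono integrable_mult_right integrable_p_indicator Bochner_Integration.integrable_diff
        integrable_lower_partial_moment_integrand)
      (auto simp: indicator_def algebra_simps intro: mult_right_mono)
  also have "\<dots> = (b - a) * F b" unfolding F_eq_integral by simp
  finally show "H b - H a \<le> (b - a) * F b" .
qed

lemma H_linearization_bounds:
  "0 \<le> H (q + s) - H q - s * F q" "H (q + s) - H q - s * F q \<le> s * (F (q + s) - F q)"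
  using H_diff_bounds[of q "q + s"] H_diff_bounds[of "q + s" q]
  by (cases "0 \<le> s"; simp add: algebra_simps)+

lemma H_le_add_abs_diff: "H b \<le> H a + \<bar>b - a\<bar>"
proof (cases "a \<le> b")
  case True
  then have "H b - H a \<le> (b - a) * 1"
    using H_diff_bounds(2)[OF True] F_le_1[of b] by (meson diff_ge_0_iff_ge mult_left_mono order_trans)
  then show ?thesis by simp
next
  case False
  then have "0 \<le> (a - b) * F b" using F_nonneg[of b] by simp
  then show ?thesis using H_diff_bounds(1)[of b a] False by simp
qed

lemma borel_measurable_quantile_indicator:
  assumes "a < 1"
  shows "(\<lambda>u. indicator {0<..<a} u * quantile F u) \<in> borel_measurable borel"
proof -
  have "mono_on {0<..<a} (quantile F)"
    using assms by (intro mono_onI) (metis greaterThanLessThan_iff less_le_trans order.trans order_less_imp_le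
        quantile_le_iff order_refl)
  then have "quantile F \<in> borel_measurable (restrict_space borel {0<..<a})"
    by (rule borel_measurable_mono_on_fnc)
  then have "(\<lambda>u. indicator {0<..<a} u *\<^sub>R quantile F u) \<in> borel_measurable borel"
    by (subst borel_measurable_restrict_space_iff[symmetric]) auto
  then show ?thesis by simp
qed

lemma ennreal_H_eq_nn_integral_F:
  "ennreal (H t) = (\<integral>\<^sup>+s. ennreal (indicator {..<t} s * F s) \<partial>lborel)"
proof -
  have "ennreal (H t) = (\<integral>\<^sup>+ y. ennreal (p y * ((t - y) * indicator {..t} y)) \<partial>lborel)"
    unfolding lower_partial_moment_def
    by (rule nn_integral_eq_integral[symmetric])
      (use integrable_lower_partial_moment_integrand[of t]
        in \<open>auto intro!: mult_nonneg_nonneg p_nonneg simp: indicator_def\<close>)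
  also have "\<dots> = (\<integral>\<^sup>+ y. \<integral>\<^sup>+ s. ennreal (p y * (if y \<le> s then 1 else 0) * (if s < t then 1 else 0)) \<partial>lborel \<partial>lborel)"
  proof (rule nn_integral_cong)
    fix y
    have "(\<integral>\<^sup>+ s. ennreal (p y * (if y \<le> s then 1 else 0) * (if s < t then 1 else 0)) \<partial>lborel)
        = (\<integral>\<^sup>+ s. ennreal (p y) * indicator {y..<t} s \<partial>lborel)"
      by (intro nn_integral_cong) (auto simp: indicator_def)
    also have "\<dots> = ennreal (p y) * emeasure lborel {y..<t}"
      by (subst nn_integral_cmult_indicator) auto
    also have "\<dots> = ennreal (p y * ((t - y) * indicator {..t} y))"
      using p_nonneg[of y] by (cases "y \<le> t") (auto simp: ennreal_mult[symmetric])
    finally show "ennreal (p y * ((t - y) * indicator {..t} y))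
        = (\<integral>\<^sup>+ s. ennreal (p y * (if y \<le> s then 1 else 0) * (if s < t then 1 else 0)) \<partial>lborel)"
      by simp
  qed
  also have "\<dots> = (\<integral>\<^sup>+ s. \<integral>\<^sup>+ y. ennreal (p y * (if y \<le> s then 1 else 0) * (if s < t then 1 else 0)) \<partial>lborel \<partial>lborel)"
    by (rule lborel_pair.Fubini'[symmetric]) measurable
  also have "\<dots> = (\<integral>\<^sup>+s. ennreal (indicator {..<t} s * F s) \<partial>lborel)"
  proof (rule nn_integral_cong)
    fix s
    show "(\<integral>\<^sup>+ y. ennreal (p y * (if y \<le> s then 1 else 0) * (if s < t then 1 else 0)) \<partial>lborel)
        = ennreal (indicator {..<t} s * F s)"
    proof (cases "s < t")
      case True
      have "(\<integral>\<^sup>+ y. ennreal (p y * (if y \<le> s then 1 else 0) * (if s < t then 1 else 0)) \<partial>lborel)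
          = (\<integral>\<^sup>+ y. ennreal (p y * indicator {..s} y) \<partial>lborel)"
        using True by (intro nn_integral_cong) auto
      also have "\<dots> = ennreal (F s)" unfolding F_eq_integral
        by (rule nn_integral_eq_integral) (auto intro!: integrable_p_indicator mult_nonneg_nonneg p_nonneg)
      finally show ?thesis using True by simp
    qed auto
  qed
  finally show ?thesis .
qed

lemma emeasure_Ioo_inter_atMost_F:
  assumes a: "0 < a" "a < 1" and "s < quantile F a"
  shows "emeasure lborel ({0<..<a} \<inter> {..F s}) = ennreal (F s)"
proof -
  have Fs: "0 \<le> F s" "F s \<le> a"
    using F_nonneg F_mono[of s "quantile F a"] F_quantile[OF a] assms(3) by auto
  show ?thesis
  proof (cases "F s < a")
    case True
    then have "{0<..<a} \<inter> {..F s} = {0<..F s}" using Fs by auto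
    then show ?thesis using Fs by simp
  next
    case False
    then have "{0<..<a} \<inter> {..F s} = {0<..<a}" using Fs by auto
    then show ?thesis using Fs False by simp
  qed
qed

lemma nn_integral_quantile_gap:
  assumes a: "0 < a" "a < 1"
  defines "Q \<equiv> quantile F a"
  shows "(\<integral>\<^sup>+ u. ennreal (indicator {0<..<a} u * (Q - quantile F u)) \<partial>lborel)
    = (\<integral>\<^sup>+s. ennreal (indicator {..<Q} s * F s) \<partial>lborel)"
proof -
  have "(\<integral>\<^sup>+ u. ennreal (indicator {0<..<a} u * (Q - quantile F u)) \<partial>lborel)
      = (\<integral>\<^sup>+ u. \<integral>\<^sup>+ s. ennreal ((if 0 < u \<and> u < a then 1 else 0) * (if s < Q then 1 else 0) * (if u \<le> F s then 1 else 0)) \<partial>lborel \<partial>lborel)"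
  proof (rule nn_integral_cong)
    fix u
    show "ennreal (indicator {0<..<a} u * (Q - quantile F u))
      = (\<integral>\<^sup>+ s. ennreal ((if 0 < u \<and> u < a then 1 else 0) * (if s < Q then 1 else 0) * (if u \<le> F s then 1 else 0)) \<partial>lborel)"
    proof (cases "u \<in> {0<..<a}")
      case True
      then have u: "0 < u" "u < 1" using a by auto
      have "quantile F u \<le> Q"
        using quantile_le_iff[OF u, of Q] F_quantile[OF a] True by (simp add: Q_def)
      moreover have "(\<integral>\<^sup>+ s. ennreal ((if 0 < u \<and> u < a then 1 else 0) * (if s < Q then 1 else 0) * (if u \<le> F s then 1 else 0)) \<partial>lborel)
          = (\<integral>\<^sup>+ s. indicator {quantile F u..<Q} s \<partial>lborel)"
        using True quantile_le_iff[OF u] by (intro nn_integral_cong) (auto simp: indicator_def)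
      ultimately show ?thesis using True by simp
    qed auto
  qed
  also have "\<dots> = (\<integral>\<^sup>+ s. \<integral>\<^sup>+ u. ennreal ((if 0 < u \<and> u < a then 1 else 0) * (if s < Q then 1 else 0) * (if u \<le> F s then 1 else 0)) \<partial>lborel \<partial>lborel)"
    by (rule lborel_pair.Fubini') measurable
  also have "\<dots> = (\<integral>\<^sup>+s. ennreal (indicator {..<Q} s * F s) \<partial>lborel)"
  proof (rule nn_integral_cong)
    fix s
    show "(\<integral>\<^sup>+ u. ennreal ((if 0 < u \<and> u < a then 1 else 0) * (if s < Q then 1 else 0) * (if u \<le> F s then 1 else 0)) \<partial>lborel)
      = ennreal (indicator {..<Q} s * F s)"
    proof (cases "s < Q")
      case True
      have "(\<integral>\<^sup>+ u. ennreal ((if 0 < u \<and> u < a then 1 else 0) * (if s < Q then 1 else 0) * (if u \<le> F s then 1 else 0)) \<partial>lborel)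
          = (\<integral>\<^sup>+ u. indicator ({0<..<a} \<inter> {..F s}) u \<partial>lborel)"
        using True by (intro nn_integral_cong) (auto simp: indicator_def)
      also have "\<dots> = ennreal (F s)"
        using emeasure_Ioo_inter_atMost_F[OF a True[unfolded Q_def]] by simp
      finally show ?thesis using True by simp
    qed auto
  qed
  finally show ?thesis .
qed

text \<open>By Tonelli, \<open>H Q\<close> and \<open>\<integral>\<^sub>0\<^sup>a (Q - quantile F u) du\<close> both equal the integral of \<open>F\<close>
  over \<open>{..<Q}\<close>.\<close>

lemma H_quantile:
  assumes a: "0 < a" "a < 1"
  shows "H (quantile F a) = a * quantile F a - (LBINT u=0..a. quantile F u)"
proof -
  define Q where "Q = quantile F a"
  have gap_nonneg: "0 \<le> indicator {0<..<a} u * (Q - quantile F u)" for u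
    using quantile_le_iff[of u Q] F_quantile[OF a] a by (auto simp: indicator_def Q_def)
  have "(\<lambda>u. Q * indicator {0<..<a} u - indicator {0<..<a} u * quantile F u) \<in> borel_measurable borel"
    using borel_measurable_quantile_indicator[OF a(2)] by measurable
  then have gap_measurable: "(\<lambda>u. indicator {0<..<a} u * (Q - quantile F u)) \<in> borel_measurable borel"
    by (simp add: algebra_simps)
  have gap_nn_integral: "(\<integral>\<^sup>+ u. ennreal (indicator {0<..<a} u * (Q - quantile F u)) \<partial>lborel) = ennreal (H Q)"
    unfolding Q_def nn_integral_quantile_gap[OF a] ennreal_H_eq_nn_integral_F ..
  have gap_integrable: "integrable lborel (\<lambda>u. indicator {0<..<a} u * (Q - quantile F u))"
    by (rule integrableI_nonneg) (use gap_measurable gap_nonneg gap_nn_integral in auto)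
  have gap_integral: "(LBINT u. indicator {0<..<a} u * (Q - quantile F u)) = H Q"
    using nn_integral_eq_integral[OF gap_integrable] gap_nonneg gap_nn_integral H_nonneg
      integral_nonneg_AE[of "\<lambda>u. indicator {0<..<a} u * (Q - quantile F u)" lborel]
    by simp
  have "(LBINT u=0..a. quantile F u) = (LBINT u. Q * indicator {0<..<a} u - indicator {0<..<a} u * (Q - quantile F u))"
    using a by (simp add: interval_lebesgue_integral_def set_lebesgue_integral_def zero_ereal_def algebra_simps)
  also have "\<dots> = a * Q - H Q"
    using a gap_integrable gap_integral by (subst Bochner_Integration.integral_diff) auto
  finally show ?thesis by (simp add: Q_def)
qed

lemma H_quantile_expected_shortfall:
  "0 < a \<Longrightarrow> a < 1 \<Longrightarrow> H (quantile F a) = a * quantile F a - a * expected_shortfall F a"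
  using H_quantile by (simp add: expected_shortfall_def)

end

section \<open>Conditional densities\<close>

locale cond_density =
  fixes M :: "'a measure" and X :: "'a \<Rightarrow> real^'k" and Y :: "'a \<Rightarrow> real"
    and f :: "real^'k \<Rightarrow> real \<Rightarrow> real"
  assumes prob_space_M: "prob_space M"
    and X_measurable [measurable]: "X \<in> borel_measurable M"
    and Y_measurable [measurable]: "Y \<in> borel_measurable M"
    and cond_density: "is_cond_density M X Y f"
begin

abbreviation "PX \<equiv> distr M borel X"

lemma f_measurable [measurable]: "(\<lambda>(x, y). f x y) \<in> borel_measurable (borel \<Otimes>\<^sub>M borel)"
  using cond_density by (simp add: is_cond_density_def)

lemma f_nonneg: "0 \<le> f x y"
  using cond_density by (simp add: is_cond_density_def)

lemma prob_space_PX: "prob_space PX"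
  by (rule prob_space.prob_space_distr[OF prob_space_M]) simp

lemma sets_PX_lborel: "sets (PX \<Otimes>\<^sub>M lborel) = sets (borel \<Otimes>\<^sub>M borel)"
  by (rule sets_pair_measure_cong) auto

lemma f_measurable_PX_lborel: "(\<lambda>z. f (fst z) (snd z)) \<in> borel_measurable (PX \<Otimes>\<^sub>M lborel)"
  using measurable_cong_sets[OF sets_PX_lborel refl] f_measurable by (simp add: case_prod_beta')

lemma distr_XY: "distr M (borel \<Otimes>\<^sub>M borel) (\<lambda>\<omega>. (X \<omega>, Y \<omega>)) = density (PX \<Otimes>\<^sub>M lborel) (\<lambda>z. f (fst z) (snd z))"
  using cond_density by (simp add: is_cond_density_def case_prod_beta')

interpretation PX: prob_space PX by (rule prob_space_PX)

interpretation PX_lborel: pair_sigma_finite PX lborel ..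

lemma nn_integral_XY:
  assumes [measurable]: "g \<in> borel_measurable (borel \<Otimes>\<^sub>M borel)"
  shows "(\<integral>\<^sup>+\<omega>. g (X \<omega>, Y \<omega>) \<partial>M) = (\<integral>\<^sup>+x. \<integral>\<^sup>+y. ennreal (f x y) * g (x, y) \<partial>lborel \<partial>PX)"
proof -
  have g: "g \<in> borel_measurable (PX \<Otimes>\<^sub>M lborel)"
    by (simp add: measurable_cong_sets[OF sets_PX_lborel refl])
  have "(\<integral>\<^sup>+\<omega>. g (X \<omega>, Y \<omega>) \<partial>M) = integral\<^sup>N (distr M (borel \<Otimes>\<^sub>M borel) (\<lambda>\<omega>. (X \<omega>, Y \<omega>))) g"
    by (rule nn_integral_distr[symmetric]) auto
  also have "\<dots> = (\<integral>\<^sup>+z. ennreal (f (fst z) (snd z)) * g z \<partial>(PX \<Otimes>\<^sub>M lborel))"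
    unfolding distr_XY using f_measurable_PX_lborel g by (subst nn_integral_density) auto
  also have "\<dots> = (\<integral>\<^sup>+x. \<integral>\<^sup>+y. ennreal (f x y) * g (x, y) \<partial>lborel \<partial>PX)"
    using f_measurable_PX_lborel g by (subst lborel.nn_integral_fst[symmetric]) auto
  finally show ?thesis .
qed

lemma integral_XY:
  fixes g :: "real^'k \<Rightarrow> real \<Rightarrow> real"
  assumes g [measurable]: "(\<lambda>(x, y). g x y) \<in> borel_measurable (borel \<Otimes>\<^sub>M borel)"
    and integrable: "integrable M (\<lambda>\<omega>. g (X \<omega>) (Y \<omega>))"
  shows "(LINT \<omega>|M. g (X \<omega>) (Y \<omega>)) = (LINT x|PX. LINT y|lborel. f x y * g x y)"
    and "integrable PX (\<lambda>x. LINT y|lborel. f x y * g x y)"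
proof -
  define G where "G = (\<lambda>(x, y). g x y)"
  have G: "G \<in> borel_measurable (PX \<Otimes>\<^sub>M lborel)"
    by (simp add: G_def measurable_cong_sets[OF sets_PX_lborel refl])
  have "integrable (distr M (borel \<Otimes>\<^sub>M borel) (\<lambda>\<omega>. (X \<omega>, Y \<omega>))) G"
    using integrable by (subst integrable_distr_eq) (auto simp: G_def)
  then have "integrable (PX \<Otimes>\<^sub>M lborel) (\<lambda>z. f (fst z) (snd z) *\<^sub>R G z)"
    unfolding distr_XY using G f_measurable_PX_lborel f_nonneg by (subst (asm) integrable_density) auto
  then have joint: "integrable (PX \<Otimes>\<^sub>M lborel) (\<lambda>(x, y). f x y * g x y)"
    by (simp add: G_def case_prod_beta')
  have "(LINT \<omega>|M. g (X \<omega>) (Y \<omega>)) = integral\<^sup>L (distr M (borel \<Otimes>\<^sub>M borel) (\<lambda>\<omega>. (X \<omega>, Y \<omega>))) G"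
    by (subst integral_distr) (auto simp: G_def)
  also have "\<dots> = integral\<^sup>L (PX \<Otimes>\<^sub>M lborel) (\<lambda>(x, y). f x y * g x y)"
    unfolding distr_XY using G f_measurable_PX_lborel f_nonneg
    by (subst integral_density) (auto simp: G_def case_prod_beta')
  also have "\<dots> = (LINT x|PX. LINT y|lborel. f x y * g x y)"
    by (rule PX_lborel.integral_fst[OF joint, symmetric])
  finally show "(LINT \<omega>|M. g (X \<omega>) (Y \<omega>)) = (LINT x|PX. LINT y|lborel. f x y * g x y)" .
  show "integrable PX (\<lambda>x. LINT y|lborel. f x y * g x y)"
    by (rule PX_lborel.integrable_fst[OF joint])
qed

lemma integral_XY_cond:
  fixes g :: "real^'k \<Rightarrow> real \<Rightarrow> real"
  assumes "(\<lambda>(x, y). g x y) \<in> borel_measurable (borel \<Otimes>\<^sub>M borel)"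
    and "integrable M (\<lambda>\<omega>. g (X \<omega>) (Y \<omega>))"
    and [measurable]: "h \<in> borel_measurable borel"
    and cond: "AE x in PX. (LINT y|lborel. f x y * g x y) = h x"
  shows "(LINT \<omega>|M. g (X \<omega>) (Y \<omega>)) = (LINT x|PX. h x)" and "integrable PX h"
proof -
  note XY = integral_XY[OF assms(1,2)]
  show "integrable PX h"
    by (rule integrable_cong_AE_imp[OF XY(2)]) (use cond in auto)
  show "(LINT \<omega>|M. g (X \<omega>) (Y \<omega>)) = (LINT x|PX. h x)"
    unfolding XY(1) by (rule integral_cong_AE) (use XY(2) cond in auto)
qed

lemma integrable_XY_of_cond_bound:
  fixes g :: "real^'k \<Rightarrow> real \<Rightarrow> real"
  assumes g [measurable]: "(\<lambda>(x, y). g x y) \<in> borel_measurable (borel \<Otimes>\<^sub>M borel)"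
    and g_nonneg: "\<And>x y. 0 \<le> g x y"
    and cond: "AE x in PX. integrable lborel (\<lambda>y. f x y * g x y) \<and> (LINT y|lborel. f x y * g x y) \<le> h x"
    and h: "integrable PX h"
  shows "integrable M (\<lambda>\<omega>. g (X \<omega>) (Y \<omega>))"
proof (rule integrableI_nonneg)
  have "(\<integral>\<^sup>+\<omega>. ennreal (g (X \<omega>) (Y \<omega>)) \<partial>M) = (\<integral>\<^sup>+x. \<integral>\<^sup>+y. ennreal (f x y) * ennreal (g x y) \<partial>lborel \<partial>PX)"
    using nn_integral_XY[of "\<lambda>z. ennreal (g (fst z) (snd z))"] by (simp add: case_prod_beta')
  also have "\<dots> \<le> (\<integral>\<^sup>+x. ennreal (h x) \<partial>PX)"
  proof (rule nn_integral_mono_AE)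
    show "AE x in PX. (\<integral>\<^sup>+y. ennreal (f x y) * ennreal (g x y) \<partial>lborel) \<le> ennreal (h x)"
      using cond
    proof eventually_elim
      case (elim x)
      have "(\<integral>\<^sup>+y. ennreal (f x y) * ennreal (g x y) \<partial>lborel) = ennreal (LINT y|lborel. f x y * g x y)"
        using elim f_nonneg g_nonneg by (subst nn_integral_eq_integral[symmetric]) (auto simp: ennreal_mult)
      then show ?case using elim by (auto intro: ennreal_leI)
    qed
  qed
  also have "\<dots> \<le> (\<integral>\<^sup>+x. ennreal (norm (h x)) \<partial>PX)"
    by (intro nn_integral_mono ennreal_leI) auto
  also have "\<dots> < \<infinity>"
    using h by (simp add: integrable_iff_bounded)
  finally show "(\<integral>\<^sup>+\<omega>. ennreal (g (X \<omega>) (Y \<omega>)) \<partial>M) < \<infinity>" .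
qed (use g_nonneg in auto)

lemma AE_integral_f_eq_1: "AE x in PX. integrable lborel (f x) \<and> integral\<^sup>L lborel (f x) = 1"
proof -
  define c where "c x = (\<integral>\<^sup>+y. ennreal (f x y) \<partial>lborel)" for x
  have c_measurable: "c \<in> borel_measurable PX"
    unfolding c_def using f_measurable_PX_lborel
    by (intro lborel.borel_measurable_nn_integral) (simp add: split_beta')
  have "density PX c = PX"
  proof (rule measure_eqI)
    fix A assume "A \<in> sets (density PX c)"
    then have A [measurable]: "A \<in> sets borel" by simp
    have "emeasure (density PX c) A = (\<integral>\<^sup>+x. c x * indicator A x \<partial>PX)"
      by (rule emeasure_density[OF c_measurable]) simp
    also have "\<dots> = (\<integral>\<^sup>+x. \<integral>\<^sup>+y. ennreal (f x y) * indicator A x \<partial>lborel \<partial>PX)"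
      unfolding c_def by (intro nn_integral_cong nn_integral_multc[symmetric]) simp
    also have "\<dots> = (\<integral>\<^sup>+\<omega>. indicator A (X \<omega>) \<partial>M)"
      using nn_integral_XY[of "\<lambda>z. indicator A (fst z)"] by simp
    also have "\<dots> = (\<integral>\<^sup>+x. indicator A x \<partial>PX)"
      by (rule nn_integral_distr[symmetric]) auto
    also have "\<dots> = emeasure PX A" by simp
    finally show "emeasure (density PX c) A = emeasure PX A" .
  qed simp
  also have "PX = density PX (\<lambda>_. 1)" by (simp add: density_1)
  finally have "AE x in PX. c x = 1"
    using PX.density_unique_iff[OF c_measurable] by simp
  then show ?thesis
  proof eventually_elim
    case (elim x)
    then have integrable: "integrable lborel (f x)"
      by (intro integrableI_nonneg) (auto simp: c_def f_nonneg)
    then have "ennreal (integral\<^sup>L lborel (f x)) = 1"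
      using elim nn_integral_eq_integral[OF integrable] f_nonneg by (simp add: c_def)
    then show ?case
      using integrable integral_nonneg_AE[of "f x" lborel] f_nonneg by simp
  qed
qed

lemma borel_measurable_cdf_of_density [measurable]:
  assumes [measurable]: "t \<in> borel_measurable borel"
  shows "(\<lambda>x. cdf_of_density (f x) (t x)) \<in> borel_measurable borel"
proof -
  have "(\<lambda>x. LINT y|lborel. (if y \<le> t x then 1 else 0) * f x y) \<in> borel_measurable borel"
    by (rule lborel.borel_measurable_lebesgue_integral) measurable
  moreover have "cdf_of_density (f x) (t x) = (LINT y|lborel. (if y \<le> t x then 1 else 0) * f x y)" for x
    unfolding cdf_of_density_def set_lebesgue_integral_def
    by (rule Bochner_Integration.integral_cong) (auto simp: indicator_def)
  ultimately show ?thesis by simp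
qed

lemma borel_measurable_lower_partial_moment [measurable]:
  assumes [measurable]: "t \<in> borel_measurable borel"
  shows "(\<lambda>x. lower_partial_moment (f x) (t x)) \<in> borel_measurable borel"
proof -
  have "(\<lambda>x. LINT y|lborel. f x y * ((t x - y) * (if y \<le> t x then 1 else 0))) \<in> borel_measurable borel"
    by (rule lborel.borel_measurable_lebesgue_integral) measurable
  moreover have "lower_partial_moment (f x) (t x) = (LINT y|lborel. f x y * ((t x - y) * (if y \<le> t x then 1 else 0)))" for x
    unfolding lower_partial_moment_def
    by (rule Bochner_Integration.integral_cong) (auto simp: indicator_def)
  ultimately show ?thesis by simp
qed

end

section \<open>Limits, Fatou's lemma and moment bounds\<close>

lemma inner_eq_0_AE_imp_eq_0:
  fixes X :: "'a \<Rightarrow> real^'k"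
  assumes integrable: "\<And>i j. integrable M (\<lambda>\<omega>. X \<omega> $ i * X \<omega> $ j)"
    and pos_def: "pos_def (\<chi> i j. LINT \<omega>|M. X \<omega> $ i * X \<omega> $ j)"
    and AE_zero: "AE \<omega> in M. X \<omega> \<bullet> w = 0"
  shows "w = 0"
proof (rule ccontr)
  assume "w \<noteq> 0"
  then have "0 < w \<bullet> ((\<chi> i j. LINT \<omega>|M. X \<omega> $ i * X \<omega> $ j) *v w)"
    using pos_def unfolding pos_def_def by blast
  also have "\<dots> = (\<Sum>i\<in>UNIV. \<Sum>j\<in>UNIV. w $ i * w $ j * (LINT \<omega>|M. X \<omega> $ i * X \<omega> $ j))"
    unfolding inner_vec_def matrix_vector_mult_def sum_distrib_left
    by (intro sum.cong refl) (simp add: sum_distrib_left ac_simps)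
  also have "\<dots> = (LINT \<omega>|M. (\<Sum>i\<in>UNIV. \<Sum>j\<in>UNIV. w $ i * w $ j * (X \<omega> $ i * X \<omega> $ j)))"
    using integrable by (simp add: Bochner_Integration.integral_sum integrable_sum)
  also have "\<dots> = (LINT \<omega>|M. (X \<omega> \<bullet> w)\<^sup>2)"
    by (rule Bochner_Integration.integral_cong)
      (simp_all add: power2_eq_square inner_vec_def sum_product mult.commute mult.left_commute)
  also have "\<dots> = 0"
    by (rule integral_eq_zero_AE) (use AE_zero in \<open>auto elim!: eventually_mono\<close>)
  finally show False by simp
qed

lemma AE_not_eventually_ge_of_integral_tendsto_0:
  fixes a :: "nat \<Rightarrow> 'a \<Rightarrow> real"
  assumes integrable: "\<And>n. integrable M (a n)"
    and nonneg: "\<And>n. AE x in M. 0 \<le> a n x"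
    and lim: "(\<lambda>n. integral\<^sup>L M (a n)) \<longlonglongrightarrow> 0"
  shows "AE x in M. \<not> (\<exists>c>0. eventually (\<lambda>n. c \<le> a n x) sequentially)"
proof -
  have "(\<lambda>n. \<integral>\<^sup>+x. ennreal (a n x) \<partial>M) \<longlonglongrightarrow> ennreal 0"
    using tendsto_ennrealI[OF lim] nn_integral_eq_integral[OF integrable nonneg] by simp
  then have "liminf (\<lambda>n. \<integral>\<^sup>+x. ennreal (a n x) \<partial>M) = 0"
    by (simp add: lim_imp_Liminf)
  moreover have "(\<integral>\<^sup>+x. liminf (\<lambda>n. ennreal (a n x)) \<partial>M) \<le> liminf (\<lambda>n. \<integral>\<^sup>+x. ennreal (a n x) \<partial>M)"
    using integrable by (intro nn_integral_liminf) auto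
  ultimately have "AE x in M. liminf (\<lambda>n. ennreal (a n x)) = 0"
    using integrable by (subst nn_integral_0_iff_AE[symmetric]) (auto intro!: borel_measurable_liminf)
  then show ?thesis
  proof eventually_elim
    case (elim x)
    show ?case
    proof
      assume "\<exists>c>0. eventually (\<lambda>n. c \<le> a n x) sequentially"
      then obtain c where "c > 0" "eventually (\<lambda>n. c \<le> a n x) sequentially"
        by blast
      then have "eventually (\<lambda>n. ennreal c \<le> ennreal (a n x)) sequentially"
        by (auto elim!: eventually_mono intro: ennreal_leI)
      then have "ennreal c \<le> liminf (\<lambda>n. ennreal (a n x))"
        by (intro Liminf_bounded) auto
      with \<open>c > 0\<close> elim show False by simp
    qed
  qed
qed

lemma le_one_plus_square: "(t::real) \<le> 1 + t\<^sup>2"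
proof -
  have "0 \<le> (t - 1 / 2)\<^sup>2" by simp
  then show ?thesis by (simp add: power2_eq_square algebra_simps)
qed

lemma power_mult_le_moment_bound:
  fixes m g B S :: real
  assumes "0 \<le> g" "0 \<le> m" "m \<le> 1 \<Longrightarrow> g \<le> B" "0 \<le> B" "g\<^sup>2 \<le> S"
  shows "m ^ j * g \<le> 1 + B + m ^ (2 * j + 1) * S"
proof (cases "m \<le> 1")
  case True
  then have "m ^ j * g \<le> 1 * B"
    using assms by (intro mult_mono power_le_one) auto
  moreover have "0 \<le> m ^ (2 * j + 1) * S" using assms by (simp add: order_trans[OF zero_le_power2])
  ultimately show ?thesis by linarith
next
  case False
  have "m ^ j * g \<le> 1 + (m ^ j * g)\<^sup>2" by (rule le_one_plus_square)
  also have "(m ^ j * g)\<^sup>2 = m ^ (2 * j) * g\<^sup>2"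
    by (simp add: power_mult_distrib power_mult[symmetric] mult.commute)
  also have "\<dots> \<le> m ^ (2 * j + 1) * S"
    using False assms by (intro mult_mono power_increasing) auto
  finally show ?thesis using assms(4) by linarith
qed

lemma continuous_inner_bounded:
  fixes G :: "real \<Rightarrow> real" and W :: "(real^'k) set"
  assumes "continuous_on UNIV G" and "bounded W"
  shows "\<exists>B. \<forall>x w. maxnorm x \<le> R \<longrightarrow> w \<in> W \<longrightarrow> \<bar>G (x \<bullet> w)\<bar> \<le> B"
proof -
  obtain C where C: "\<And>w. w \<in> W \<Longrightarrow> norm w \<le> C"
    using \<open>bounded W\<close> by (auto simp: bounded_iff)
  define K where "K = CARD('k) * \<bar>R\<bar> * \<bar>C\<bar>"
  have "compact (G ` {-K..K})"
    using continuous_on_subset[OF assms(1)] by (intro compact_continuous_image) auto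
  then obtain B where B: "\<forall>y\<in>G ` {-K..K}. norm y \<le> B"
    using compact_imp_bounded bounded_iff by metis
  have "\<bar>G (x \<bullet> w)\<bar> \<le> B" if "maxnorm x \<le> R" "w \<in> W" for x w
  proof -
    have "\<bar>x \<bullet> w\<bar> \<le> CARD('k) * maxnorm x * maxnorm w" by (rule abs_inner_le_maxnorm)
    also have "\<dots> \<le> CARD('k) * \<bar>R\<bar> * \<bar>C\<bar>"
    proof (intro mult_mono mult_left_mono)
      show "maxnorm x \<le> \<bar>R\<bar>" using that(1) by linarith
      show "maxnorm w \<le> \<bar>C\<bar>" using maxnorm_le_norm[of w] C[OF that(2)] by linarith
    qed (auto simp: maxnorm_nonneg)
    finally have "\<bar>x \<bullet> w\<bar> \<le> K" by (simp add: K_def)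
    then have "x \<bullet> w \<in> {-K..K}" by auto
    then show ?thesis using B by auto
  qed
  then show ?thesis by blast
qed

lemma le_SUP_continuous_inner:
  fixes G :: "real \<Rightarrow> real" and sel :: "'t \<Rightarrow> real^'k"
  assumes "continuous_on UNIV G" and "bounded (sel ` U)" and "\<tau> \<in> U"
  shows "G (x \<bullet> sel \<tau>) \<le> (SUP \<tau>\<in>U. G (x \<bullet> sel \<tau>))"
proof (rule cSUP_upper[OF \<open>\<tau> \<in> U\<close>])
  obtain B where "\<forall>x' w. maxnorm x' \<le> maxnorm x \<longrightarrow> w \<in> sel ` U \<longrightarrow> \<bar>G (x' \<bullet> w)\<bar> \<le> B"
    using continuous_inner_bounded[OF assms(1,2)] by blast
  then show "bdd_above ((\<lambda>\<tau>. G (x \<bullet> sel \<tau>)) ` U)"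
    by (intro bdd_aboveI2[of _ _ B]) force
qed

lemma exists_moment_bound:
  fixes G :: "real \<Rightarrow> real" and sel :: "'t \<Rightarrow> real^'k"
  assumes "continuous_on UNIV G" and "\<And>z. 0 \<le> G z" and "bounded (sel ` U)"
    and S: "\<And>x \<tau>. \<tau> \<in> U \<Longrightarrow> (G (x \<bullet> sel \<tau>))\<^sup>2 \<le> S x"
  shows "\<exists>B. \<forall>x. \<forall>\<tau>\<in>U. maxnorm x ^ j * G (x \<bullet> sel \<tau>) \<le> 1 + B + maxnorm x ^ (2 * j + 1) * S x"
proof -
  obtain B where B: "\<forall>x w. maxnorm x \<le> 1 \<longrightarrow> w \<in> sel ` U \<longrightarrow> \<bar>G (x \<bullet> w)\<bar> \<le> B"
    using continuous_inner_bounded[OF assms(1,3)] by blast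
  have "maxnorm x ^ j * G (x \<bullet> sel \<tau>) \<le> 1 + max B 0 + maxnorm x ^ (2 * j + 1) * S x"
    if "\<tau> \<in> U" for x \<tau>
    using B that by (intro power_mult_le_moment_bound S assms(2) maxnorm_nonneg) force+
  then show ?thesis by blast
qed

lemma tendsto_inner_of_maxnorm_tendsto_0:
  fixes a :: "nat \<Rightarrow> real^'k"
  assumes "(\<lambda>n. maxnorm (a n - a0)) \<longlonglongrightarrow> 0"
  shows "(\<lambda>n. x \<bullet> a n) \<longlonglongrightarrow> x \<bullet> a0"
proof -
  have "(\<lambda>n. x \<bullet> a n - x \<bullet> a0) \<longlonglongrightarrow> 0"
  proof (rule Lim_null_comparison)
    show "\<forall>\<^sub>F n in sequentially. norm (x \<bullet> a n - x \<bullet> a0) \<le> real CARD('k) * maxnorm x * maxnorm (a n - a0)"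
      using abs_inner_le_maxnorm[of x "a _ - a0"] by (simp add: inner_diff_right)
    show "(\<lambda>n. real CARD('k) * maxnorm x * maxnorm (a n - a0)) \<longlonglongrightarrow> 0"
      using tendsto_mult_right_zero[OF assms] by simp
  qed
  then show ?thesis by (simp add: LIM_zero_iff)
qed

lemma eventually_half_le_of_tendsto:
  fixes g :: "nat \<Rightarrow> real"
  shows "g \<longlonglongrightarrow> L \<Longrightarrow> 0 < L \<Longrightarrow> eventually (\<lambda>n. L / 2 \<le> g n) sequentially"
  by (drule order_tendstoD(1)[of _ _ _ "L / 2"]) (auto elim: eventually_mono)

section \<open>The joint quantile and expected-shortfall regression model\<close>

text \<open>The set \<open>U\<close> plays the role of the neighbourhood \<open>Ubar Th d0 th0\<close>; only three of the
  moment conditions of the theorem are needed.\<close>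

locale es_regression = cond_density M X Y f
  for M :: "'a measure" and X :: "'a \<Rightarrow> real^'k" and Y f +
  fixes \<alpha> :: real and th0 :: "(real^'k) \<times> (real^'k)" and U :: "((real^'k) \<times> (real^'k)) set"
    and G1d G2 G2d :: "real \<Rightarrow> real"
  assumes alpha: "0 < \<alpha>" "\<alpha> < 1"
    and model: "AE x in PX. quantile (cond_cdf f x) \<alpha> = x \<bullet> fst th0 \<and>
      expected_shortfall (cond_cdf f x) \<alpha> = x \<bullet> snd th0"
    and second_moment_Y: "AE x in PX. integrable lborel (\<lambda>y. y\<^sup>2 * f x y)"
    and density_at_quantile: "AE x in PX. isCont (f x) (x \<bullet> fst th0) \<and> 0 < f x (x \<bullet> fst th0)"
    and integrable_second_moment_X: "\<And>i j. integrable M (\<lambda>\<omega>. X \<omega> $ i * X \<omega> $ j)"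
    and pos_def_second_moment_X: "pos_def (\<chi> i j. LINT \<omega>|M. X \<omega> $ i * X \<omega> $ j)"
    and G1d_nonneg: "\<And>z. 0 \<le> G1d z" and G2_pos: "\<And>z. 0 < G2 z" and G2d_pos: "\<And>z. 0 < G2d z"
    and continuous_G1d: "continuous_on UNIV G1d"
    and continuous_G2: "continuous_on UNIV G2"
    and continuous_G2d: "continuous_on UNIV G2d"
    and th0_in_U: "th0 \<in> U" and bounded_U: "bounded U"
    and moment_G1d: "integrable M (\<lambda>\<omega>. maxnorm (X \<omega>) ^ 3 * (SUP \<tau>\<in>U. (G1d (X \<omega> \<bullet> fst \<tau>))\<^sup>2))"
    and moment_G2: "integrable M (\<lambda>\<omega>. maxnorm (X \<omega>) ^ 3 * (SUP \<tau>\<in>U. (G2 (X \<omega> \<bullet> snd \<tau>))\<^sup>2))"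
    and moment_G2d: "integrable M (\<lambda>\<omega>. maxnorm (X \<omega>) ^ 5 * (SUP \<tau>\<in>U. G2d (X \<omega> \<bullet> snd \<tau>))\<^sup>2)"
begin

abbreviation "F x \<equiv> cdf_of_density (f x)"
abbreviation "H x \<equiv> lower_partial_moment (f x)"

lemma borel_measurable_G [measurable]:
  "G1d \<in> borel_measurable borel" "G2 \<in> borel_measurable borel" "G2d \<in> borel_measurable borel"
  using continuous_G1d continuous_G2 continuous_G2d by (auto intro: borel_measurable_continuous_onI)

lemma integrable_const_M [simp]: "integrable M (\<lambda>_. c::real)"
proof -
  interpret prob_space M by (rule prob_space_M)
  show ?thesis by simp
qed

definition regular :: "real^'k \<Rightarrow> bool" where
  "regular x \<longleftrightarrow> real_density_first_moment (f x) \<and>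
     quantile (F x) \<alpha> = x \<bullet> fst th0 \<and> expected_shortfall (F x) \<alpha> = x \<bullet> snd th0 \<and>
     isCont (f x) (x \<bullet> fst th0) \<and> 0 < f x (x \<bullet> fst th0)"

lemma AE_regular: "AE x in PX. regular x"
  using AE_integral_f_eq_1 second_moment_Y model density_at_quantile
proof eventually_elim
  case (elim x)
  have "integrable lborel (\<lambda>y. y * f x y)"
  proof (rule Bochner_Integration.integrable_bound)
    show "integrable lborel (\<lambda>y. f x y + y\<^sup>2 * f x y)" using elim by auto
    have "\<bar>y\<bar> * f x y \<le> (1 + y\<^sup>2) * f x y" for y
      using le_one_plus_square[of "\<bar>y\<bar>"] f_nonneg by (intro mult_right_mono) auto
    then show "AE y in lborel. norm (y * f x y) \<le> norm (f x y + y\<^sup>2 * f x y)"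
      using f_nonneg by (intro AE_I2) (simp add: abs_mult algebra_simps)
  qed simp
  then have "real_density_first_moment (f x)"
    using elim by unfold_locales (auto simp: f_nonneg)
  then show ?case
    using elim by (simp add: regular_def cond_cdf_eq_cdf_of_density)
qed

lemma AE_regular_M: "AE \<omega> in M. regular (X \<omega>)"
  using AE_distrD[OF X_measurable AE_regular] .

lemma regular_F_quantile: "regular x \<Longrightarrow> F x (x \<bullet> fst th0) = \<alpha>"
  using real_density.F_quantile[of "f x" \<alpha>] alpha
  by (auto simp: regular_def real_density_first_moment_def)

lemma regular_H_quantile: "regular x \<Longrightarrow> H x (x \<bullet> fst th0) = \<alpha> * (x \<bullet> fst th0) - \<alpha> * (x \<bullet> snd th0)"
  using real_density_first_moment.H_quantile_expected_shortfall[of "f x" \<alpha>] alpha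
  by (auto simp: regular_def)

lemma U_maxnorm_bound:
  obtains R where "0 \<le> R" and "\<And>\<tau>. \<tau> \<in> U \<Longrightarrow> maxnorm (fst \<tau>) \<le> R \<and> maxnorm (snd \<tau>) \<le> R"
proof -
  obtain R where R: "\<And>\<tau>. \<tau> \<in> U \<Longrightarrow> norm \<tau> \<le> R"
    using bounded_U by (auto simp: bounded_iff)
  have "maxnorm (fst \<tau>) \<le> R \<and> maxnorm (snd \<tau>) \<le> R" if "\<tau> \<in> U" for \<tau>
  proof -
    have "norm (fst \<tau>) \<le> norm \<tau>" "norm (snd \<tau>) \<le> norm \<tau>"
      using norm_fst_le[of "fst \<tau>" "snd \<tau>"] norm_snd_le[of "snd \<tau>" "fst \<tau>"] by simp_all
    then show ?thesis
      using maxnorm_le_norm[of "fst \<tau>"] maxnorm_le_norm[of "snd \<tau>"] R[OF that] by linarith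
  qed
  moreover have "0 \<le> R" using R[OF th0_in_U] norm_ge_zero[of th0] by linarith
  ultimately show ?thesis using that by blast
qed

lemma bounded_fst_U: "bounded (fst ` U)" and bounded_snd_U: "bounded (snd ` U)"
  using bounded_U by (auto intro: bounded_fst bounded_snd)

lemma G1d_sq_le_SUP: "\<tau> \<in> U \<Longrightarrow> (G1d (x \<bullet> fst \<tau>))\<^sup>2 \<le> (SUP \<tau>\<in>U. (G1d (x \<bullet> fst \<tau>))\<^sup>2)"
  by (rule le_SUP_continuous_inner[where G = "\<lambda>z. (G1d z)\<^sup>2"])
    (auto intro: continuous_on_power continuous_G1d bounded_fst_U)

lemma G2_sq_le_SUP: "\<tau> \<in> U \<Longrightarrow> (G2 (x \<bullet> snd \<tau>))\<^sup>2 \<le> (SUP \<tau>\<in>U. (G2 (x \<bullet> snd \<tau>))\<^sup>2)"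
  by (rule le_SUP_continuous_inner[where G = "\<lambda>z. (G2 z)\<^sup>2"])
    (auto intro: continuous_on_power continuous_G2 bounded_snd_U)

lemma G2d_sq_le_SUP_sq: "\<tau> \<in> U \<Longrightarrow> (G2d (x \<bullet> snd \<tau>))\<^sup>2 \<le> (SUP \<tau>\<in>U. G2d (x \<bullet> snd \<tau>))\<^sup>2"
  using le_SUP_continuous_inner[OF continuous_G2d bounded_snd_U] G2d_pos[THEN less_imp_le]
  by (intro power_mono) auto

lemma norm_psi1_le:
  fixes x :: "real^'k"
  shows "norm (psi1 \<alpha> G1d G2 y x \<theta>) \<le> CARD('k) * (maxnorm x * G1d (x \<bullet> fst \<theta>) + maxnorm x * G2 (x \<bullet> snd \<theta>) / \<alpha>)"
proof -
  define w where "w = \<alpha> * G1d (x \<bullet> fst \<theta>) + G2 (x \<bullet> snd \<theta>)"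
  have w: "0 \<le> w" using alpha G1d_nonneg G2_pos[THEN less_imp_le] by (simp add: w_def)
  have ind: "\<bar>(if y \<le> x \<bullet> fst \<theta> then 1 else 0) - \<alpha>\<bar> \<le> 1" using alpha by auto
  have "norm (psi1 \<alpha> G1d G2 y x \<theta>) = \<bar>(if y \<le> x \<bullet> fst \<theta> then 1 else 0) - \<alpha>\<bar> * w / \<alpha> * norm x"
    using alpha w by (simp add: psi1_def w_def abs_mult)
  also have "\<dots> \<le> 1 * w / \<alpha> * (CARD('k) * maxnorm x)"
    using ind w alpha norm_le_card_maxnorm[of x]
    by (intro mult_mono divide_right_mono mult_right_mono) auto
  also have "\<dots> = CARD('k) * (maxnorm x * G1d (x \<bullet> fst \<theta>) + maxnorm x * G2 (x \<bullet> snd \<theta>) / \<alpha>)"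
    using alpha by (simp add: w_def field_simps)
  finally show ?thesis .
qed

lemma integrable_psi1:
  assumes "\<theta> \<in> U"
  shows "integrable M (\<lambda>\<omega>. psi1 \<alpha> G1d G2 (Y \<omega>) (X \<omega>) \<theta>)"
proof -
  obtain B1 where B1: "\<forall>x. \<forall>\<tau>\<in>U. maxnorm x * G1d (x \<bullet> fst \<tau>) \<le> 1 + B1 + maxnorm x ^ 3 * (SUP \<tau>\<in>U. (G1d (x \<bullet> fst \<tau>))\<^sup>2)"
    using exists_moment_bound[OF continuous_G1d G1d_nonneg bounded_fst_U G1d_sq_le_SUP, of 1] by auto
  obtain B2 where B2: "\<forall>x. \<forall>\<tau>\<in>U. maxnorm x * G2 (x \<bullet> snd \<tau>) \<le> 1 + B2 + maxnorm x ^ 3 * (SUP \<tau>\<in>U. (G2 (x \<bullet> snd \<tau>))\<^sup>2)"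
    using exists_moment_bound[OF continuous_G2 G2_pos[THEN less_imp_le] bounded_snd_U G2_sq_le_SUP, of 1] by auto
  define h where "h \<omega> = CARD('k) * ((1 + B1 + maxnorm (X \<omega>) ^ 3 * (SUP \<tau>\<in>U. (G1d (X \<omega> \<bullet> fst \<tau>))\<^sup>2))
    + (1 + B2 + maxnorm (X \<omega>) ^ 3 * (SUP \<tau>\<in>U. (G2 (X \<omega> \<bullet> snd \<tau>))\<^sup>2)) / \<alpha>)" for \<omega>
  show ?thesis
  proof (rule Bochner_Integration.integrable_bound)
    show "integrable M h"
      unfolding h_def using moment_G1d moment_G2
      by (intro integrable_mult_right Bochner_Integration.integrable_add integrable_divide) auto
    have "norm (psi1 \<alpha> G1d G2 (Y \<omega>) (X \<omega>) \<theta>) \<le> norm (h \<omega>)" for \<omega>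
      unfolding h_def real_norm_def using B1 B2 assms alpha
      by (intro order_trans[OF norm_psi1_le] order_trans[OF _ abs_ge_self] mult_left_mono add_mono
          divide_right_mono) auto
    then show "AE \<omega> in M. norm (psi1 \<alpha> G1d G2 (Y \<omega>) (X \<omega>) \<theta>) \<le> norm (h \<omega>)"
      by simp
  qed (simp add: psi1_def)
qed

lemma integrable_maxnorm_sq_G2d:
  assumes "\<theta> \<in> U"
  shows "integrable M (\<lambda>\<omega>. maxnorm (X \<omega>) ^ 2 * G2d (X \<omega> \<bullet> snd \<theta>))"
proof -
  obtain B where B: "\<forall>x. \<forall>\<tau>\<in>U. maxnorm x ^ 2 * G2d (x \<bullet> snd \<tau>) \<le> 1 + B + maxnorm x ^ 5 * (SUP \<tau>\<in>U. G2d (x \<bullet> snd \<tau>))\<^sup>2"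
    using exists_moment_bound[OF continuous_G2d G2d_pos[THEN less_imp_le] bounded_snd_U G2d_sq_le_SUP_sq, of 2]
    by auto
  show ?thesis
  proof (rule Bochner_Integration.integrable_bound)
    show "integrable M (\<lambda>\<omega>. 1 + B + maxnorm (X \<omega>) ^ 5 * (SUP \<tau>\<in>U. G2d (X \<omega> \<bullet> snd \<tau>))\<^sup>2)"
      using moment_G2d by auto
    show "AE \<omega> in M. norm (maxnorm (X \<omega>) ^ 2 * G2d (X \<omega> \<bullet> snd \<theta>))
        \<le> norm (1 + B + maxnorm (X \<omega>) ^ 5 * (SUP \<tau>\<in>U. G2d (X \<omega> \<bullet> snd \<tau>))\<^sup>2)"
      using B assms G2d_pos[THEN less_imp_le] by (intro AE_I2) (auto intro: order_trans[OF _ abs_ge_self])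
  qed simp
qed

lemma integrable_PX_maxnorm_sq_G2d:
  "\<theta> \<in> U \<Longrightarrow> integrable PX (\<lambda>x. maxnorm x ^ 2 * G2d (x \<bullet> snd \<theta>))"
  using integrable_maxnorm_sq_G2d by (subst integrable_distr_eq) auto

lemma regular_H_le:
  fixes x :: "real^'k"
    and R :: real
  assumes "regular x" and "\<theta> \<in> U" and R: "\<And>\<tau>. \<tau> \<in> U \<Longrightarrow> maxnorm (fst \<tau>) \<le> R \<and> maxnorm (snd \<tau>) \<le> R"
  shows "H x (x \<bullet> fst \<theta>) \<le> 4 * real CARD('k) * maxnorm x * R"
proof -
  interpret D: real_density_first_moment "f x" using \<open>regular x\<close> by (simp add: regular_def)
  have bound: "\<bar>x \<bullet> w\<bar> \<le> real CARD('k) * maxnorm x * R" if "w \<in> fst ` U \<union> snd ` U" for w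
    using that R by (auto intro!: abs_inner_le_maxnorm_bound)
  have "\<alpha> * (x \<bullet> fst th0 - x \<bullet> snd th0) \<le> \<alpha> * \<bar>x \<bullet> fst th0 - x \<bullet> snd th0\<bar>"
    using alpha by (intro mult_left_mono) auto
  also have "\<dots> \<le> \<bar>x \<bullet> fst th0\<bar> + \<bar>x \<bullet> snd th0\<bar>"
    using alpha abs_triangle_ineq4[of "x \<bullet> fst th0" "x \<bullet> snd th0"]
    by (meson abs_ge_zero less_imp_le mult_left_le_one_le order_trans)
  finally have "\<alpha> * (x \<bullet> fst th0 - x \<bullet> snd th0) \<le> \<bar>x \<bullet> fst th0\<bar> + \<bar>x \<bullet> snd th0\<bar>" .
  then have "D.H (x \<bullet> fst \<theta>) \<le> \<bar>x \<bullet> fst th0\<bar> + \<bar>x \<bullet> snd th0\<bar> + (\<bar>x \<bullet> fst \<theta>\<bar> + \<bar>x \<bullet> fst th0\<bar>)"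
    using D.H_le_add_abs_diff[of "x \<bullet> fst \<theta>" "x \<bullet> fst th0"] regular_H_quantile[OF \<open>regular x\<close>]
    by (simp add: algebra_simps)
  also have "\<dots> \<le> 4 * (real CARD('k) * maxnorm x * R)"
    using bound[of "fst th0"] bound[of "snd th0"] bound[of "fst \<theta>"] th0_in_U \<open>\<theta> \<in> U\<close> by auto
  finally show ?thesis by simp
qed

lemma norm_psi2_le:
  fixes x :: "real^'k" and y R :: real
  assumes "maxnorm (fst \<theta>) \<le> R" and "maxnorm (snd \<theta>) \<le> R"
  defines "z \<equiv> (x \<bullet> fst \<theta> - y) * (if y \<le> x \<bullet> fst \<theta> then 1 else 0)"
  shows "norm (psi2 \<alpha> G2d y x \<theta>) \<le> 2 * (real CARD('k))\<^sup>2 * R * (maxnorm x ^ 2 * G2d (x \<bullet> snd \<theta>))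
    + real CARD('k) / \<alpha> * (G2d (x \<bullet> snd \<theta>) * maxnorm x * z)"
proof -
  have "(1 / \<alpha>) * (x \<bullet> fst \<theta> - y) * (if y \<le> x \<bullet> fst \<theta> then 1 else 0) = z / \<alpha>"
    by (simp add: z_def)
  moreover have "0 \<le> z / \<alpha>" using alpha by (simp add: z_def)
  ultimately have "\<bar>x \<bullet> snd \<theta> - x \<bullet> fst \<theta> + (1 / \<alpha>) * (x \<bullet> fst \<theta> - y) * (if y \<le> x \<bullet> fst \<theta> then 1 else 0)\<bar>
      \<le> 2 * real CARD('k) * maxnorm x * R + z / \<alpha>"
    using abs_inner_le_maxnorm_bound[OF assms(1), of x] abs_inner_le_maxnorm_bound[OF assms(2), of x]
    unfolding abs_le_iff by linarith
  then have "norm (psi2 \<alpha> G2d y x \<theta>) \<le> G2d (x \<bullet> snd \<theta>) * (2 * real CARD('k) * maxnorm x * R + z / \<alpha>) * (real CARD('k) * maxnorm x)"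
    unfolding psi2_def norm_scaleR abs_mult using G2d_pos[of "x \<bullet> snd \<theta>"]
    by (intro mult_mono mult_left_mono norm_le_card_maxnorm) auto
  also have "\<dots> = 2 * (real CARD('k))\<^sup>2 * R * (maxnorm x ^ 2 * G2d (x \<bullet> snd \<theta>))
      + real CARD('k) / \<alpha> * (G2d (x \<bullet> snd \<theta>) * maxnorm x * z)"
    by (simp add: power2_eq_square field_simps)
  finally show ?thesis .
qed

lemma integrable_shortfall_term:
  assumes "\<theta> \<in> U"
  shows "integrable M (\<lambda>\<omega>. G2d (X \<omega> \<bullet> snd \<theta>) * maxnorm (X \<omega>)
    * ((X \<omega> \<bullet> fst \<theta> - Y \<omega>) * (if Y \<omega> \<le> X \<omega> \<bullet> fst \<theta> then 1 else 0)))"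
proof -
  obtain R :: real where R: "\<And>\<tau>. \<tau> \<in> U \<Longrightarrow> maxnorm (fst \<tau>) \<le> R \<and> maxnorm (snd \<tau>) \<le> R"
    using U_maxnorm_bound by blast
  define g where "g x y = G2d (x \<bullet> snd \<theta>) * maxnorm x * ((x \<bullet> fst \<theta> - y) * (if y \<le> x \<bullet> fst \<theta> then 1 else 0))"
    for x :: "real^'k" and y
  have "integrable M (\<lambda>\<omega>. g (X \<omega>) (Y \<omega>))"
  proof (rule integrable_XY_of_cond_bound)
    show "(\<lambda>(x, y). g x y) \<in> borel_measurable (borel \<Otimes>\<^sub>M borel)" unfolding g_def by measurable
    show "0 \<le> g x y" for x y
      unfolding g_def using G2d_pos[THEN less_imp_le] maxnorm_nonneg by (auto intro!: mult_nonneg_nonneg)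
    show "integrable PX (\<lambda>x. 4 * real CARD('k) * R * (maxnorm x ^ 2 * G2d (x \<bullet> snd \<theta>)))"
      using integrable_PX_maxnorm_sq_G2d[OF assms] by simp
    show "AE x in PX. integrable lborel (\<lambda>y. f x y * g x y)
      \<and> (LINT y|lborel. f x y * g x y) \<le> 4 * real CARD('k) * R * (maxnorm x ^ 2 * G2d (x \<bullet> snd \<theta>))"
      using AE_regular
    proof eventually_elim
      case (elim x)
      interpret D: real_density_first_moment "f x" using elim by (simp add: regular_def)
      have eq: "f x y * g x y = G2d (x \<bullet> snd \<theta>) * maxnorm x * (f x y * ((x \<bullet> fst \<theta> - y) * indicator {..x \<bullet> fst \<theta>} y))" for y
        by (simp add: g_def indicator_def)
      have "G2d (x \<bullet> snd \<theta>) * maxnorm x * D.H (x \<bullet> fst \<theta>) \<le> G2d (x \<bullet> snd \<theta>) * maxnorm x * (4 * real CARD('k) * maxnorm x * R)"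
        using regular_H_le[OF elim assms R] G2d_pos[THEN less_imp_le] maxnorm_nonneg
        by (intro mult_left_mono mult_nonneg_nonneg) auto
      moreover have "integrable lborel (\<lambda>y. f x y * g x y)"
        unfolding eq by (intro integrable_mult_right D.integrable_lower_partial_moment_integrand)
      moreover have "(LINT y|lborel. f x y * g x y) = G2d (x \<bullet> snd \<theta>) * maxnorm x * D.H (x \<bullet> fst \<theta>)"
        unfolding eq lower_partial_moment_def by simp
      ultimately show ?case by (simp add: power2_eq_square mult_ac)
    qed
  qed
  then show ?thesis by (simp add: g_def)
qed

lemma integrable_psi2:
  assumes "\<theta> \<in> U"
  shows "integrable M (\<lambda>\<omega>. psi2 \<alpha> G2d (Y \<omega>) (X \<omega>) \<theta>)"
proof -
  obtain R :: real where R: "\<And>\<tau>. \<tau> \<in> U \<Longrightarrow> maxnorm (fst \<tau>) \<le> R \<and> maxnorm (snd \<tau>) \<le> R"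
    using U_maxnorm_bound by blast
  define h where "h \<omega> = 2 * (real CARD('k))\<^sup>2 * R * (maxnorm (X \<omega>) ^ 2 * G2d (X \<omega> \<bullet> snd \<theta>))
    + real CARD('k) / \<alpha> * (G2d (X \<omega> \<bullet> snd \<theta>) * maxnorm (X \<omega>)
      * ((X \<omega> \<bullet> fst \<theta> - Y \<omega>) * (if Y \<omega> \<le> X \<omega> \<bullet> fst \<theta> then 1 else 0)))" for \<omega>
  show ?thesis
  proof (rule Bochner_Integration.integrable_bound)
    show "integrable M h"
      unfolding h_def using integrable_maxnorm_sq_G2d[OF assms] integrable_shortfall_term[OF assms] by auto
    have "norm (psi2 \<alpha> G2d (Y \<omega>) (X \<omega>) \<theta>) \<le> norm (h \<omega>)" for \<omega>
      using norm_psi2_le[where x = "X \<omega>" and y = "Y \<omega>" and R = R and \<theta> = \<theta>] R[OF assms]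
      unfolding h_def by auto
    then show "AE \<omega> in M. norm (psi2 \<alpha> G2d (Y \<omega>) (X \<omega>) \<theta>) \<le> norm (h \<omega>)" by simp
  qed (simp add: psi2_def)
qed

definition "psi1_mean \<theta> = (LINT \<omega>|M. psi1 \<alpha> G1d G2 (Y \<omega>) (X \<omega>) \<theta>)"
definition "psi2_mean \<theta> = (LINT \<omega>|M. psi2 \<alpha> G2d (Y \<omega>) (X \<omega>) \<theta>)"

definition quantile_gap :: "(real^'k) \<times> (real^'k) \<Rightarrow> real^'k \<Rightarrow> real" where
  "quantile_gap \<theta> x = x \<bullet> (fst \<theta> - fst th0) * (F x (x \<bullet> fst \<theta>) - F x (x \<bullet> fst th0))"

definition es_remainder :: "(real^'k) \<times> (real^'k) \<Rightarrow> real^'k \<Rightarrow> real" where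
  "es_remainder \<theta> x =
  (H x (x \<bullet> fst \<theta>) - H x (x \<bullet> fst th0) - x \<bullet> (fst \<theta> - fst th0) * F x (x \<bullet> fst th0)) / \<alpha>"

definition "quantile_term \<theta> x = (\<alpha> * G1d (x \<bullet> fst \<theta>) + G2 (x \<bullet> snd \<theta>)) / \<alpha> * quantile_gap \<theta> x"
definition "es_term \<theta> x = G2d (x \<bullet> snd \<theta>) * (x \<bullet> (snd \<theta> - snd th0))\<^sup>2"
definition "remainder_term \<theta> x = G2d (x \<bullet> snd \<theta>) * (x \<bullet> (snd \<theta> - snd th0)) * es_remainder \<theta> x"

lemma borel_measurable_terms [measurable]:
  "quantile_term \<theta> \<in> borel_measurable borel" "es_term \<theta> \<in> borel_measurable borel"
  "remainder_term \<theta> \<in> borel_measurable borel"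
  unfolding quantile_term_def[abs_def] quantile_gap_def es_term_def[abs_def] remainder_term_def[abs_def]
    es_remainder_def
  by measurable

lemma regular_quantile_gap_nonneg: "regular x \<Longrightarrow> 0 \<le> quantile_gap \<theta> x"
  using real_density.F_mono[of "f x" "x \<bullet> fst \<theta>" "x \<bullet> fst th0"]
    real_density.F_mono[of "f x" "x \<bullet> fst th0" "x \<bullet> fst \<theta>"]
  by (cases "x \<bullet> fst \<theta> \<le> x \<bullet> fst th0")
    (auto simp: regular_def real_density_first_moment_def quantile_gap_def inner_diff_right
      intro: mult_nonpos_nonpos)

lemma regular_es_remainder_bounds:
  assumes "regular x"
  shows "0 \<le> \<alpha> * es_remainder \<theta> x" and "\<alpha> * es_remainder \<theta> x \<le> quantile_gap \<theta> x"
proof -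
  interpret D: real_density_first_moment "f x" using assms by (simp add: regular_def)
  have "x \<bullet> fst \<theta> = x \<bullet> fst th0 + x \<bullet> (fst \<theta> - fst th0)" by (simp add: inner_diff_right)
  then show "0 \<le> \<alpha> * es_remainder \<theta> x" "\<alpha> * es_remainder \<theta> x \<le> quantile_gap \<theta> x"
    using D.H_linearization_bounds[of "x \<bullet> fst th0" "x \<bullet> (fst \<theta> - fst th0)"] alpha
    unfolding es_remainder_def quantile_gap_def by simp_all
qed

lemma regular_quantile_gap_quadratic:
  assumes "regular x"
  shows "\<exists>c>0. \<exists>e>0. \<forall>\<theta>. \<bar>x \<bullet> (fst \<theta> - fst th0)\<bar> \<le> e \<longrightarrow> c * (x \<bullet> (fst \<theta> - fst th0))\<^sup>2 \<le> quantile_gap \<theta> x"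
proof -
  interpret D: real_density_first_moment "f x" using assms by (simp add: regular_def)
  obtain c e where "c > 0" "e > 0"
    and quadratic: "\<And>s. \<bar>s\<bar> \<le> e \<Longrightarrow> c * s\<^sup>2 \<le> s * (F x (x \<bullet> fst th0 + s) - F x (x \<bullet> fst th0))"
    using D.F_increment_quadratic_lower_bound[of "x \<bullet> fst th0"] assms by (auto simp: regular_def)
  moreover have "x \<bullet> fst \<theta> = x \<bullet> fst th0 + x \<bullet> (fst \<theta> - fst th0)" for \<theta>
    by (simp add: inner_diff_right)
  ultimately show ?thesis unfolding quantile_gap_def by metis
qed

text \<open>This is where the expected-shortfall half of the model enters.\<close>

lemma regular_shortfall_decomposition:
  assumes "regular x"
  shows "x \<bullet> snd \<theta> - x \<bullet> fst \<theta> + H x (x \<bullet> fst \<theta>) / \<alpha> = x \<bullet> (snd \<theta> - snd th0) + es_remainder \<theta> x"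
  using regular_F_quantile[OF assms] regular_H_quantile[OF assms] alpha
  by (simp add: es_remainder_def inner_diff_right field_simps)

lemma psi1_mean_pairing:
  assumes "\<theta> \<in> U"
  shows "(fst \<theta> - fst th0) \<bullet> psi1_mean \<theta> = (LINT x|PX. quantile_term \<theta> x)"
    and "integrable PX (quantile_term \<theta>)"
proof -
  define g where "g x y = (fst \<theta> - fst th0) \<bullet> psi1 \<alpha> G1d G2 y x \<theta>" for x :: "real^'k" and y
  have g: "(\<lambda>(x, y). g x y) \<in> borel_measurable (borel \<Otimes>\<^sub>M borel)" unfolding g_def psi1_def by measurable
  have integrable: "integrable M (\<lambda>\<omega>. g (X \<omega>) (Y \<omega>))" unfolding g_def using integrable_psi1[OF assms] by simp
  have "AE x in PX. (LINT y|lborel. f x y * g x y) = quantile_term \<theta> x"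
    using AE_regular
  proof eventually_elim
    case (elim x)
    interpret D: real_density_first_moment "f x" using elim by (simp add: regular_def)
    define c where "c = (\<alpha> * G1d (x \<bullet> fst \<theta>) + G2 (x \<bullet> snd \<theta>)) / \<alpha> * (x \<bullet> (fst \<theta> - fst th0))"
    have g_eq: "g x y = c * ((if y \<le> x \<bullet> fst \<theta> then 1 else 0) - \<alpha>)" for y
      unfolding g_def psi1_def inner_scaleR_right inner_commute[of _ x] c_def by simp
    have "(LINT y|lborel. f x y * g x y) = (LINT y|lborel. c * (f x y * indicator {..x \<bullet> fst \<theta>} y) - c * \<alpha> * f x y)"
      unfolding g_eq by (intro Bochner_Integration.integral_cong) (auto simp: indicator_def algebra_simps)
    also have "\<dots> = c * (F x (x \<bullet> fst \<theta>) - \<alpha>)"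
      using D.integrable_p_indicator[of "{..x \<bullet> fst \<theta>}"] D.integrable_p D.integral_p
      by (simp add: D.F_eq_integral right_diff_distrib)
    also have "\<dots> = quantile_term \<theta> x"
      using regular_F_quantile[OF elim] by (simp add: c_def quantile_term_def quantile_gap_def)
    finally show ?case .
  qed
  note XY = integral_XY_cond[OF g integrable _ this]
  show "integrable PX (quantile_term \<theta>)" using XY(2) by simp
  show "(fst \<theta> - fst th0) \<bullet> psi1_mean \<theta> = (LINT x|PX. quantile_term \<theta> x)"
    using XY(1) integrable_psi1[OF assms] by (simp add: psi1_mean_def g_def)
qed

lemma psi2_mean_pairing:
  assumes "\<theta> \<in> U"
  shows "(snd \<theta> - snd th0) \<bullet> psi2_mean \<theta> = (LINT x|PX. es_term \<theta> x + remainder_term \<theta> x)"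
    and "integrable PX (\<lambda>x. es_term \<theta> x + remainder_term \<theta> x)"
proof -
  define g where "g x y = (snd \<theta> - snd th0) \<bullet> psi2 \<alpha> G2d y x \<theta>" for x :: "real^'k" and y
  have g: "(\<lambda>(x, y). g x y) \<in> borel_measurable (borel \<Otimes>\<^sub>M borel)" unfolding g_def psi2_def by measurable
  have integrable: "integrable M (\<lambda>\<omega>. g (X \<omega>) (Y \<omega>))" unfolding g_def using integrable_psi2[OF assms] by simp
  have "AE x in PX. (LINT y|lborel. f x y * g x y) = es_term \<theta> x + remainder_term \<theta> x"
    using AE_regular
  proof eventually_elim
    case (elim x)
    interpret D: real_density_first_moment "f x" using elim by (simp add: regular_def)
    define c where "c = G2d (x \<bullet> snd \<theta>) * (x \<bullet> (snd \<theta> - snd th0))"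
    have "(LINT y|lborel. f x y * g x y)
        = (LINT y|lborel. c * (x \<bullet> snd \<theta> - x \<bullet> fst \<theta>) * f x y
            + c / \<alpha> * (f x y * ((x \<bullet> fst \<theta> - y) * indicator {..x \<bullet> fst \<theta>} y)))"
      unfolding g_def psi2_def inner_scaleR_right inner_commute[of _ x] c_def using alpha
      by (intro Bochner_Integration.integral_cong) (auto simp: indicator_def field_simps)
    also have "\<dots> = c * (x \<bullet> snd \<theta> - x \<bullet> fst \<theta>) * (LINT y|lborel. f x y)
        + c / \<alpha> * (LINT y|lborel. f x y * ((x \<bullet> fst \<theta> - y) * indicator {..x \<bullet> fst \<theta>} y))"
      using D.integrable_p D.integrable_lower_partial_moment_integrand[of "x \<bullet> fst \<theta>"]
      by (subst Bochner_Integration.integral_add) auto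
    also have "\<dots> = c * (x \<bullet> snd \<theta> - x \<bullet> fst \<theta> + H x (x \<bullet> fst \<theta>) / \<alpha>)"
      using D.integral_p by (simp add: lower_partial_moment_def algebra_simps)
    also have "\<dots> = es_term \<theta> x + remainder_term \<theta> x"
      unfolding regular_shortfall_decomposition[OF elim]
      by (simp add: c_def es_term_def remainder_term_def power2_eq_square algebra_simps)
    finally show ?case .
  qed
  note XY = integral_XY_cond[OF g integrable _ this]
  show "integrable PX (\<lambda>x. es_term \<theta> x + remainder_term \<theta> x)" using XY(2) by simp
  show "(snd \<theta> - snd th0) \<bullet> psi2_mean \<theta> = (LINT x|PX. es_term \<theta> x + remainder_term \<theta> x)"
    using XY(1) integrable_psi2[OF assms] by (simp add: psi2_mean_def g_def)
qed

lemma regular_quantile_term_nonneg: "regular x \<Longrightarrow> 0 \<le> quantile_term \<theta> x"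
  unfolding quantile_term_def using alpha G1d_nonneg G2_pos[THEN less_imp_le]
  by (intro mult_nonneg_nonneg divide_nonneg_pos add_nonneg_nonneg regular_quantile_gap_nonneg) auto

lemma es_term_nonneg: "0 \<le> es_term \<theta> x"
  unfolding es_term_def using G2d_pos[THEN less_imp_le] by simp

lemma abs_inner_diff_le:
  fixes x :: "real^'k"
  shows "\<bar>x \<bullet> (fst \<theta> - fst th0)\<bar> \<le> real CARD('k) * maxnorm x * maxnorm2 (\<theta> - th0)"
    and "\<bar>x \<bullet> (snd \<theta> - snd th0)\<bar> \<le> real CARD('k) * maxnorm x * maxnorm2 (\<theta> - th0)"
  using maxnorm2_fst[of "\<theta> - th0"] maxnorm2_snd[of "\<theta> - th0"]
  by (auto intro!: abs_inner_le_maxnorm_bound)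

lemma es_term_le: "es_term \<theta> x \<le> (real CARD('k))\<^sup>2 * (maxnorm2 (\<theta> - th0))\<^sup>2 * (maxnorm x ^ 2 * G2d (x \<bullet> snd \<theta>))"
proof -
  have "(x \<bullet> (snd \<theta> - snd th0))\<^sup>2 \<le> (real CARD('k) * maxnorm x * maxnorm2 (\<theta> - th0))\<^sup>2"
    using abs_inner_diff_le(2)[of x \<theta>] by (metis abs_ge_zero power2_abs power_mono)
  then have "es_term \<theta> x \<le> G2d (x \<bullet> snd \<theta>) * (real CARD('k) * maxnorm x * maxnorm2 (\<theta> - th0))\<^sup>2"
    unfolding es_term_def using G2d_pos[THEN less_imp_le] by (rule mult_left_mono)
  then show ?thesis by (simp add: power_mult_distrib mult_ac)
qed

lemma integrable_es_term:
  assumes "\<theta> \<in> U"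
  shows "integrable PX (es_term \<theta>)"
proof (rule Bochner_Integration.integrable_bound)
  show "integrable PX (\<lambda>x. (real CARD('k))\<^sup>2 * (maxnorm2 (\<theta> - th0))\<^sup>2 * (maxnorm x ^ 2 * G2d (x \<bullet> snd \<theta>)))"
    using integrable_PX_maxnorm_sq_G2d[OF assms] by (rule integrable_mult_right)
  show "AE x in PX. norm (es_term \<theta> x)
      \<le> norm ((real CARD('k))\<^sup>2 * (maxnorm2 (\<theta> - th0))\<^sup>2 * (maxnorm x ^ 2 * G2d (x \<bullet> snd \<theta>)))"
  proof (intro AE_I2)
    fix x
    define B where "B = (real CARD('k))\<^sup>2 * (maxnorm2 (\<theta> - th0))\<^sup>2 * (maxnorm x ^ 2 * G2d (x \<bullet> snd \<theta>))"
    have "es_term \<theta> x \<le> \<bar>B\<bar>" using es_term_le[of \<theta> x] abs_ge_self[of B] unfolding B_def by linarith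
    then show "norm (es_term \<theta> x) \<le> norm B" using es_term_nonneg[of \<theta> x] by simp
  qed
qed simp

lemma regular_remainder_term_le:
  fixes x :: "real^'k"
  assumes "regular x"
  shows "\<bar>remainder_term \<theta> x\<bar> \<le> (real CARD('k) * maxnorm x * maxnorm2 (\<theta> - th0))\<^sup>2 / \<alpha>
    * G2d (x \<bullet> snd \<theta>) * \<bar>F x (x \<bullet> fst \<theta>) - F x (x \<bullet> fst th0)\<bar>"
proof -
  define K where "K = real CARD('k) * maxnorm x * maxnorm2 (\<theta> - th0)"
  have "\<alpha> * \<bar>es_remainder \<theta> x\<bar> = \<bar>\<alpha> * es_remainder \<theta> x\<bar>"
    using alpha by (simp add: abs_mult)
  also have "\<dots> \<le> quantile_gap \<theta> x"
    using regular_es_remainder_bounds[OF assms, of \<theta>] by simp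
  also have "\<dots> \<le> \<bar>x \<bullet> (fst \<theta> - fst th0)\<bar> * \<bar>F x (x \<bullet> fst \<theta>) - F x (x \<bullet> fst th0)\<bar>"
    unfolding quantile_gap_def abs_mult[symmetric] by (rule abs_ge_self)
  also have "\<dots> \<le> K * \<bar>F x (x \<bullet> fst \<theta>) - F x (x \<bullet> fst th0)\<bar>"
    unfolding K_def by (rule mult_right_mono[OF abs_inner_diff_le(1)]) simp
  finally have "\<bar>es_remainder \<theta> x\<bar> \<le> K * \<bar>F x (x \<bullet> fst \<theta>) - F x (x \<bullet> fst th0)\<bar> / \<alpha>"
    using alpha by (simp add: field_simps)
  then have "G2d (x \<bullet> snd \<theta>) * \<bar>x \<bullet> (snd \<theta> - snd th0)\<bar> * \<bar>es_remainder \<theta> x\<bar>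
      \<le> G2d (x \<bullet> snd \<theta>) * K * (K * \<bar>F x (x \<bullet> fst \<theta>) - F x (x \<bullet> fst th0)\<bar> / \<alpha>)"
    using abs_inner_diff_le(2)[of x \<theta>] G2d_pos[THEN less_imp_le]
    by (intro mult_mono mult_left_mono) (auto simp: K_def)
  then show ?thesis
    unfolding remainder_term_def K_def using G2d_pos[of "x \<bullet> snd \<theta>"]
    by (simp add: abs_mult power2_eq_square mult_ac)
qed

definition "pairing \<theta> = (fst \<theta> - fst th0) \<bullet> psi1_mean \<theta> + (snd \<theta> - snd th0) \<bullet> psi2_mean \<theta>"

lemma abs_pairing_le:
  "\<bar>pairing \<theta>\<bar> \<le> 2 * real CARD('k) * maxnorm2 (\<theta> - th0) * maxnorm2 (psi1_mean \<theta>, psi2_mean \<theta>)"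
proof -
  have "\<bar>u \<bullet> w\<bar> \<le> real CARD('k) * maxnorm2 (\<theta> - th0) * maxnorm2 (psi1_mean \<theta>, psi2_mean \<theta>)"
    if "maxnorm u \<le> maxnorm2 (\<theta> - th0)" "maxnorm w \<le> maxnorm2 (psi1_mean \<theta>, psi2_mean \<theta>)" for u w :: "real^'k"
  proof (rule order_trans[OF abs_inner_le_maxnorm])
    show "real CARD('k) * maxnorm u * maxnorm w
        \<le> real CARD('k) * maxnorm2 (\<theta> - th0) * maxnorm2 (psi1_mean \<theta>, psi2_mean \<theta>)"
      using that maxnorm_nonneg[of u] maxnorm_nonneg[of w] by (intro mult_mono mult_left_mono) auto
  qed
  from this[OF maxnorm2_fst maxnorm2_fst] this[OF maxnorm2_snd maxnorm2_snd]
  show ?thesis unfolding pairing_def by simp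
qed

lemma pairing_decomposition:
  assumes "\<theta> \<in> U"
  shows "pairing \<theta> = (LINT x|PX. quantile_term \<theta> x) + (LINT x|PX. es_term \<theta> x) + (LINT x|PX. remainder_term \<theta> x)"
    and "integrable PX (remainder_term \<theta>)"
proof -
  have "integrable PX (\<lambda>x. (es_term \<theta> x + remainder_term \<theta> x) - es_term \<theta> x)"
    using psi2_mean_pairing(2)[OF assms] integrable_es_term[OF assms] by (rule Bochner_Integration.integrable_diff)
  then show remainder: "integrable PX (remainder_term \<theta>)" by simp
  show "pairing \<theta> = (LINT x|PX. quantile_term \<theta> x) + (LINT x|PX. es_term \<theta> x) + (LINT x|PX. remainder_term \<theta> x)"
    unfolding pairing_def psi1_mean_pairing(1)[OF assms] psi2_mean_pairing(1)[OF assms]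
    using integrable_es_term[OF assms] remainder by simp
qed

definition "shrinking \<theta> \<longleftrightarrow>
  (\<forall>n. \<theta> n \<in> U \<and> 0 < maxnorm2 (\<theta> n - th0)) \<and> (\<lambda>n. maxnorm2 (\<theta> n - th0)) \<longlonglongrightarrow> 0"

lemma shrinking_subseq: "shrinking \<theta> \<Longrightarrow> strict_mono \<sigma> \<Longrightarrow> shrinking (\<theta> \<circ> \<sigma>)"
  using LIMSEQ_subseq_LIMSEQ[of "\<lambda>n. maxnorm2 (\<theta> n - th0)" 0 \<sigma>] by (auto simp: shrinking_def o_def)

lemma shrinking_tendsto_inner:
  assumes "shrinking \<theta>"
  shows "(\<lambda>n. x \<bullet> fst (\<theta> n)) \<longlonglongrightarrow> x \<bullet> fst th0" and "(\<lambda>n. x \<bullet> snd (\<theta> n)) \<longlonglongrightarrow> x \<bullet> snd th0"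
proof -
  have r: "(\<lambda>n. maxnorm2 (\<theta> n - th0)) \<longlonglongrightarrow> 0" using assms by (simp add: shrinking_def)
  have "(\<lambda>n. maxnorm (fst (\<theta> n) - fst th0)) \<longlonglongrightarrow> 0" "(\<lambda>n. maxnorm (snd (\<theta> n) - snd th0)) \<longlonglongrightarrow> 0"
    using maxnorm2_fst[of "\<theta> _ - th0"] maxnorm2_snd[of "\<theta> _ - th0"] maxnorm_nonneg
    by (auto intro!: tendsto_sandwich[OF _ _ tendsto_const r] always_eventually)
  then show "(\<lambda>n. x \<bullet> fst (\<theta> n)) \<longlonglongrightarrow> x \<bullet> fst th0" "(\<lambda>n. x \<bullet> snd (\<theta> n)) \<longlonglongrightarrow> x \<bullet> snd th0"
    by (auto intro: tendsto_inner_of_maxnorm_tendsto_0)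
qed

lemma regular_normalized_remainder_le:
  fixes x :: "real^'k"
  assumes "regular x" and "0 < maxnorm2 (\<theta> - th0)"
  shows "\<bar>remainder_term \<theta> x / (maxnorm2 (\<theta> - th0))\<^sup>2\<bar>
    \<le> (real CARD('k) * maxnorm x)\<^sup>2 / \<alpha> * G2d (x \<bullet> snd \<theta>) * \<bar>F x (x \<bullet> fst \<theta>) - F x (x \<bullet> fst th0)\<bar>"
  using regular_remainder_term_le[OF assms(1), of \<theta>] assms(2)
  by (simp add: abs_divide power_mult_distrib field_simps)

lemma regular_normalized_remainder_tendsto_0:
  assumes "shrinking \<theta>" and "regular x"
  shows "(\<lambda>n. remainder_term (\<theta> n) x / (maxnorm2 (\<theta> n - th0))\<^sup>2) \<longlonglongrightarrow> 0"
proof (rule Lim_null_comparison[OF always_eventually])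
  interpret D: real_density_first_moment "f x" using assms(2) by (simp add: regular_def)
  show "\<forall>n. norm (remainder_term (\<theta> n) x / (maxnorm2 (\<theta> n - th0))\<^sup>2)
      \<le> (real CARD('k) * maxnorm x)\<^sup>2 / \<alpha> * G2d (x \<bullet> snd (\<theta> n)) * \<bar>F x (x \<bullet> fst (\<theta> n)) - F x (x \<bullet> fst th0)\<bar>"
    using assms regular_normalized_remainder_le by (simp add: shrinking_def)
  have "(\<lambda>n. F x (x \<bullet> fst (\<theta> n))) \<longlonglongrightarrow> F x (x \<bullet> fst th0)"
    using shrinking_tendsto_inner(1)[OF assms(1)] by (rule isCont_tendsto_compose[OF D.isCont_F])
  moreover have "(\<lambda>n. G2d (x \<bullet> snd (\<theta> n))) \<longlonglongrightarrow> G2d (x \<bullet> snd th0)"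
    using continuous_on_tendsto_compose[OF continuous_G2d shrinking_tendsto_inner(2)[OF assms(1)]] by simp
  ultimately have "(\<lambda>n. (real CARD('k) * maxnorm x)\<^sup>2 / \<alpha> * G2d (x \<bullet> snd (\<theta> n)) * \<bar>F x (x \<bullet> fst (\<theta> n)) - F x (x \<bullet> fst th0)\<bar>)
      \<longlonglongrightarrow> (real CARD('k) * maxnorm x)\<^sup>2 / \<alpha> * G2d (x \<bullet> snd th0) * \<bar>F x (x \<bullet> fst th0) - F x (x \<bullet> fst th0)\<bar>"
    by (intro tendsto_intros)
  then show "(\<lambda>n. (real CARD('k) * maxnorm x)\<^sup>2 / \<alpha> * G2d (x \<bullet> snd (\<theta> n)) * \<bar>F x (x \<bullet> fst (\<theta> n)) - F x (x \<bullet> fst th0)\<bar>)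
      \<longlonglongrightarrow> 0"
    by simp
qed

lemma normalized_remainder_dominated:
  obtains B where "\<And>\<theta> x. \<theta> \<in> U \<Longrightarrow> regular x \<Longrightarrow> 0 < maxnorm2 (\<theta> - th0) \<Longrightarrow>
    \<bar>remainder_term \<theta> x / (maxnorm2 (\<theta> - th0))\<^sup>2\<bar>
      \<le> (real CARD('k))\<^sup>2 / \<alpha> * (1 + B + maxnorm x ^ 5 * (SUP \<tau>\<in>U. G2d (x \<bullet> snd \<tau>))\<^sup>2)"
proof -
  obtain B where B: "\<forall>x. \<forall>\<tau>\<in>U. maxnorm x ^ 2 * G2d (x \<bullet> snd \<tau>) \<le> 1 + B + maxnorm x ^ 5 * (SUP \<tau>\<in>U. G2d (x \<bullet> snd \<tau>))\<^sup>2"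
    using exists_moment_bound[OF continuous_G2d G2d_pos[THEN less_imp_le] bounded_snd_U G2d_sq_le_SUP_sq, of 2]
    by auto
  have "\<bar>remainder_term \<theta> x / (maxnorm2 (\<theta> - th0))\<^sup>2\<bar>
      \<le> (real CARD('k))\<^sup>2 / \<alpha> * (1 + B + maxnorm x ^ 5 * (SUP \<tau>\<in>U. G2d (x \<bullet> snd \<tau>))\<^sup>2)"
    if "\<theta> \<in> U" "regular x" "0 < maxnorm2 (\<theta> - th0)" for \<theta> x
  proof -
    interpret D: real_density_first_moment "f x" using \<open>regular x\<close> by (simp add: regular_def)
    have "\<bar>F x (x \<bullet> fst \<theta>) - F x (x \<bullet> fst th0)\<bar> \<le> 1"
      using D.F_nonneg[of "x \<bullet> fst \<theta>"] D.F_le_1[of "x \<bullet> fst \<theta>"]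
        D.F_nonneg[of "x \<bullet> fst th0"] D.F_le_1[of "x \<bullet> fst th0"]
      unfolding abs_le_iff by linarith
    then have "(real CARD('k) * maxnorm x)\<^sup>2 / \<alpha> * G2d (x \<bullet> snd \<theta>) * \<bar>F x (x \<bullet> fst \<theta>) - F x (x \<bullet> fst th0)\<bar>
        \<le> (real CARD('k) * maxnorm x)\<^sup>2 / \<alpha> * G2d (x \<bullet> snd \<theta>) * 1"
      using alpha G2d_pos[of "x \<bullet> snd \<theta>"] by (intro mult_left_mono) auto
    also have "\<dots> = (real CARD('k))\<^sup>2 / \<alpha> * (maxnorm x ^ 2 * G2d (x \<bullet> snd \<theta>))"
      by (simp add: power_mult_distrib mult_ac)
    also have "\<dots> \<le> (real CARD('k))\<^sup>2 / \<alpha> * (1 + B + maxnorm x ^ 5 * (SUP \<tau>\<in>U. G2d (x \<bullet> snd \<tau>))\<^sup>2)"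
      using B \<open>\<theta> \<in> U\<close> alpha by (intro mult_left_mono) auto
    finally show ?thesis using regular_normalized_remainder_le[OF that(2,3)] by linarith
  qed
  then show ?thesis using that by blast
qed

lemma remainder_negligible:
  assumes "shrinking \<theta>"
  shows "(\<lambda>n. (LINT x|PX. remainder_term (\<theta> n) x) / (maxnorm2 (\<theta> n - th0))\<^sup>2) \<longlonglongrightarrow> 0"
proof -
  define r where "r n = maxnorm2 (\<theta> n - th0)" for n
  have \<theta>: "\<theta> n \<in> U" "0 < r n" for n using assms by (auto simp: shrinking_def r_def)
  obtain B where B: "\<And>\<theta> x. \<theta> \<in> U \<Longrightarrow> regular x \<Longrightarrow> 0 < maxnorm2 (\<theta> - th0) \<Longrightarrow>
    \<bar>remainder_term \<theta> x / (maxnorm2 (\<theta> - th0))\<^sup>2\<bar>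
      \<le> (real CARD('k))\<^sup>2 / \<alpha> * (1 + B + maxnorm x ^ 5 * (SUP \<tau>\<in>U. G2d (x \<bullet> snd \<tau>))\<^sup>2)"
    using normalized_remainder_dominated by blast
  have "(\<lambda>n. LINT \<omega>|M. remainder_term (\<theta> n) (X \<omega>) / (r n)\<^sup>2) \<longlonglongrightarrow> (LINT \<omega>|M. 0)"
  proof (rule integral_dominated_convergence[where w = "\<lambda>\<omega>. (real CARD('k))\<^sup>2 / \<alpha>
      * (1 + B + maxnorm (X \<omega>) ^ 5 * (SUP \<tau>\<in>U. G2d (X \<omega> \<bullet> snd \<tau>))\<^sup>2)"])
    show "AE \<omega> in M. (\<lambda>n. remainder_term (\<theta> n) (X \<omega>) / (r n)\<^sup>2) \<longlonglongrightarrow> 0"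
      using AE_regular_M by eventually_elim (simp add: r_def regular_normalized_remainder_tendsto_0[OF assms])
    show "AE \<omega> in M. norm (remainder_term (\<theta> n) (X \<omega>) / (r n)\<^sup>2)
        \<le> (real CARD('k))\<^sup>2 / \<alpha> * (1 + B + maxnorm (X \<omega>) ^ 5 * (SUP \<tau>\<in>U. G2d (X \<omega> \<bullet> snd \<tau>))\<^sup>2)" for n
      using AE_regular_M by eventually_elim (use B \<theta> in \<open>simp add: r_def\<close>)
  qed (use moment_G2d in auto)
  moreover have "(LINT x|PX. remainder_term (\<theta> n) x) = (LINT \<omega>|M. remainder_term (\<theta> n) (X \<omega>))" for n
    by (rule integral_distr) auto
  ultimately show ?thesis by (simp add: r_def)
qed

lemma direction_eq_0_of_integral_tendsto_0:
  fixes a :: "nat \<Rightarrow> real^'k \<Rightarrow> real"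
  assumes "\<And>n. integrable PX (a n)" and "\<And>n. AE x in PX. 0 \<le> a n x"
    and "(\<lambda>n. LINT x|PX. a n x) \<longlonglongrightarrow> 0"
    and lower: "\<And>x. regular x \<Longrightarrow> x \<bullet> d \<noteq> 0 \<Longrightarrow> \<exists>c>0. eventually (\<lambda>n. c \<le> a n x) sequentially"
  shows "d = 0"
proof -
  have "AE x in PX. \<not> (\<exists>c>0. eventually (\<lambda>n. c \<le> a n x) sequentially)"
    by (rule AE_not_eventually_ge_of_integral_tendsto_0) (use assms in auto)
  then have "AE x in PX. x \<bullet> d = 0"
    using AE_regular by eventually_elim (use lower in blast)
  then have "AE \<omega> in M. X \<omega> \<bullet> d = 0"
    by (rule AE_distrD[OF X_measurable])
  then show ?thesis
    by (rule inner_eq_0_AE_imp_eq_0[OF integrable_second_moment_X pos_def_second_moment_X])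
qed

lemma regular_quantile_term_ge:
  assumes "regular x" and "c * (x \<bullet> (fst \<theta> - fst th0))\<^sup>2 \<le> quantile_gap \<theta> x"
  shows "c / \<alpha> * G2 (x \<bullet> snd \<theta>) * (x \<bullet> (fst \<theta> - fst th0))\<^sup>2 \<le> quantile_term \<theta> x"
proof -
  have "c / \<alpha> * G2 (x \<bullet> snd \<theta>) * (x \<bullet> (fst \<theta> - fst th0))\<^sup>2 \<le> G2 (x \<bullet> snd \<theta>) / \<alpha> * quantile_gap \<theta> x"
    using assms(2) alpha G2_pos[of "x \<bullet> snd \<theta>"] by (simp add: mult_left_mono divide_right_mono)
  also have "\<dots> \<le> quantile_term \<theta> x"
    unfolding quantile_term_def using regular_quantile_gap_nonneg[OF assms(1)] alpha G1d_nonneg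
    by (intro mult_right_mono divide_right_mono) auto
  finally show ?thesis .
qed

lemma normalized_quantile_term_eventually_ge:
  assumes "shrinking \<theta>" and "regular x" and "x \<bullet> d \<noteq> 0"
    and direction: "(\<lambda>n. (1 / maxnorm2 (\<theta> n - th0)) *\<^sub>R (fst (\<theta> n) - fst th0)) \<longlonglongrightarrow> d"
  shows "\<exists>c>0. eventually (\<lambda>n. c \<le> quantile_term (\<theta> n) x / (maxnorm2 (\<theta> n - th0))\<^sup>2) sequentially"
proof -
  define r where "r n = maxnorm2 (\<theta> n - th0)" for n
  have r_pos: "0 < r n" for n using assms by (auto simp: shrinking_def r_def)
  obtain c e where "c > 0" "e > 0"
    and quadratic: "\<And>\<theta>. \<bar>x \<bullet> (fst \<theta> - fst th0)\<bar> \<le> e \<Longrightarrow> c * (x \<bullet> (fst \<theta> - fst th0))\<^sup>2 \<le> quantile_gap \<theta> x"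
    using regular_quantile_gap_quadratic[OF \<open>regular x\<close>] by blast
  define L where "L = c / \<alpha> * G2 (x \<bullet> snd th0) * (x \<bullet> d)\<^sup>2"
  have "0 < L" using \<open>c > 0\<close> alpha G2_pos \<open>x \<bullet> d \<noteq> 0\<close> by (simp add: L_def)
  have "(\<lambda>n. c / \<alpha> * G2 (x \<bullet> snd (\<theta> n)) * (x \<bullet> ((1 / r n) *\<^sub>R (fst (\<theta> n) - fst th0)))\<^sup>2) \<longlonglongrightarrow> L"
    unfolding L_def r_def
    using continuous_on_tendsto_compose[OF continuous_G2 shrinking_tendsto_inner(2)[OF assms(1)]] direction
    by (intro tendsto_intros) auto
  then have near_L: "eventually (\<lambda>n. L / 2 \<le> c / \<alpha> * G2 (x \<bullet> snd (\<theta> n)) * (x \<bullet> (fst (\<theta> n) - fst th0))\<^sup>2 / (r n)\<^sup>2) sequentially"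
    using r_pos \<open>0 < L\<close> by (auto dest!: eventually_half_le_of_tendsto simp: power_divide)
  have "(\<lambda>n. x \<bullet> (fst (\<theta> n) - fst th0)) \<longlonglongrightarrow> 0"
    using shrinking_tendsto_inner(1)[OF assms(1)] by (simp add: inner_diff_right LIM_zero)
  then have small: "eventually (\<lambda>n. \<bar>x \<bullet> (fst (\<theta> n) - fst th0)\<bar> \<le> e) sequentially"
    using \<open>e > 0\<close> by (auto dest!: order_tendstoD(2)[OF tendsto_rabs_zero] elim: eventually_mono)
  have "eventually (\<lambda>n. L / 2 \<le> quantile_term (\<theta> n) x / (r n)\<^sup>2) sequentially"
    using near_L small
  proof eventually_elim
    case (elim n)
    have "c / \<alpha> * G2 (x \<bullet> snd (\<theta> n)) * (x \<bullet> (fst (\<theta> n) - fst th0))\<^sup>2 / (r n)\<^sup>2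
        \<le> quantile_term (\<theta> n) x / (r n)\<^sup>2"
      using regular_quantile_term_ge[OF \<open>regular x\<close> quadratic[OF elim(2)]] by (rule divide_right_mono) simp
    with elim(1) show ?case by linarith
  qed
  then show ?thesis using \<open>0 < L\<close> unfolding r_def by (intro exI[of _ "L / 2"]) simp
qed

lemma normalized_es_term_eventually_ge:
  assumes "shrinking \<theta>" and "x \<bullet> d \<noteq> 0"
    and direction: "(\<lambda>n. (1 / maxnorm2 (\<theta> n - th0)) *\<^sub>R (snd (\<theta> n) - snd th0)) \<longlonglongrightarrow> d"
  shows "\<exists>c>0. eventually (\<lambda>n. c \<le> es_term (\<theta> n) x / (maxnorm2 (\<theta> n - th0))\<^sup>2) sequentially"
proof -
  define L where "L = G2d (x \<bullet> snd th0) * (x \<bullet> d)\<^sup>2"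
  have "0 < L" using G2d_pos \<open>x \<bullet> d \<noteq> 0\<close> by (simp add: L_def)
  have "(\<lambda>n. G2d (x \<bullet> snd (\<theta> n)) * (x \<bullet> ((1 / maxnorm2 (\<theta> n - th0)) *\<^sub>R (snd (\<theta> n) - snd th0)))\<^sup>2) \<longlonglongrightarrow> L"
    unfolding L_def
    using continuous_on_tendsto_compose[OF continuous_G2d shrinking_tendsto_inner(2)[OF assms(1)]] direction
    by (intro tendsto_intros) auto
  moreover have "G2d (x \<bullet> snd (\<theta> n)) * (x \<bullet> ((1 / maxnorm2 (\<theta> n - th0)) *\<^sub>R (snd (\<theta> n) - snd th0)))\<^sup>2
      = es_term (\<theta> n) x / (maxnorm2 (\<theta> n - th0))\<^sup>2" for n
    by (simp add: es_term_def power_divide)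
  ultimately have "eventually (\<lambda>n. L / 2 \<le> es_term (\<theta> n) x / (maxnorm2 (\<theta> n - th0))\<^sup>2) sequentially"
    using \<open>0 < L\<close> by (auto dest!: eventually_half_le_of_tendsto)
  then show ?thesis using \<open>0 < L\<close> by (intro exI[of _ "L / 2"]) simp
qed

lemma fst_direction_eq_0:
  assumes "shrinking \<theta>"
    and "(\<lambda>n. (1 / maxnorm2 (\<theta> n - th0)) *\<^sub>R (fst (\<theta> n) - fst th0)) \<longlonglongrightarrow> d"
    and lim: "(\<lambda>n. (LINT x|PX. quantile_term (\<theta> n) x) / (maxnorm2 (\<theta> n - th0))\<^sup>2) \<longlonglongrightarrow> 0"
  shows "d = 0"
proof (rule direction_eq_0_of_integral_tendsto_0)
  show "integrable PX (\<lambda>x. quantile_term (\<theta> n) x / (maxnorm2 (\<theta> n - th0))\<^sup>2)" for n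
    using psi1_mean_pairing(2) assms(1) by (simp add: shrinking_def)
  show "AE x in PX. 0 \<le> quantile_term (\<theta> n) x / (maxnorm2 (\<theta> n - th0))\<^sup>2" for n
    using AE_regular by eventually_elim (simp add: regular_quantile_term_nonneg)
  show "(\<lambda>n. LINT x|PX. quantile_term (\<theta> n) x / (maxnorm2 (\<theta> n - th0))\<^sup>2) \<longlonglongrightarrow> 0"
    using lim by simp
qed (use normalized_quantile_term_eventually_ge assms in blast)

lemma snd_direction_eq_0:
  assumes "shrinking \<theta>"
    and "(\<lambda>n. (1 / maxnorm2 (\<theta> n - th0)) *\<^sub>R (snd (\<theta> n) - snd th0)) \<longlonglongrightarrow> d"
    and lim: "(\<lambda>n. (LINT x|PX. es_term (\<theta> n) x) / (maxnorm2 (\<theta> n - th0))\<^sup>2) \<longlonglongrightarrow> 0"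
  shows "d = 0"
proof (rule direction_eq_0_of_integral_tendsto_0)
  show "integrable PX (\<lambda>x. es_term (\<theta> n) x / (maxnorm2 (\<theta> n - th0))\<^sup>2)" for n
    using integrable_es_term assms(1) by (simp add: shrinking_def)
  show "AE x in PX. 0 \<le> es_term (\<theta> n) x / (maxnorm2 (\<theta> n - th0))\<^sup>2" for n
    by (simp add: es_term_nonneg)
  show "(\<lambda>n. LINT x|PX. es_term (\<theta> n) x / (maxnorm2 (\<theta> n - th0))\<^sup>2) \<longlonglongrightarrow> 0"
    using lim by simp
qed (use normalized_es_term_eventually_ge assms in blast)

lemma normalized_parts_tendsto_0:
  assumes "shrinking \<theta>" and small: "\<And>n. pairing (\<theta> n) \<le> e n * (maxnorm2 (\<theta> n - th0))\<^sup>2"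
    and "e \<longlonglongrightarrow> 0"
  shows "(\<lambda>n. (LINT x|PX. quantile_term (\<theta> n) x) / (maxnorm2 (\<theta> n - th0))\<^sup>2) \<longlonglongrightarrow> 0"
    and "(\<lambda>n. (LINT x|PX. es_term (\<theta> n) x) / (maxnorm2 (\<theta> n - th0))\<^sup>2) \<longlonglongrightarrow> 0"
proof -
  define r where "r n = maxnorm2 (\<theta> n - th0)" for n
  have \<theta>: "\<theta> n \<in> U" "0 < r n" for n using assms by (auto simp: shrinking_def r_def)
  define A where "A n = (LINT x|PX. quantile_term (\<theta> n) x) / (r n)\<^sup>2" for n
  define B where "B n = (LINT x|PX. es_term (\<theta> n) x) / (r n)\<^sup>2" for n
  define C where "C n = (LINT x|PX. remainder_term (\<theta> n) x) / (r n)\<^sup>2" for n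
  have A_nonneg: "0 \<le> A n" for n
    unfolding A_def using AE_regular
    by (intro divide_nonneg_nonneg integral_nonneg_AE) (auto elim: eventually_mono simp: regular_quantile_term_nonneg)
  have B_nonneg: "0 \<le> B n" for n
    unfolding B_def by (intro divide_nonneg_nonneg integral_nonneg_AE) (auto simp: es_term_nonneg)
  have "A n + B n + C n = pairing (\<theta> n) / (r n)\<^sup>2" for n
    unfolding A_def B_def C_def pairing_decomposition(1)[OF \<theta>(1)] by (simp add: add_divide_distrib)
  also have "\<dots> n \<le> e n" for n
    using small[of n] \<theta>(2)[of n] by (simp add: r_def pos_divide_le_eq)
  finally have sum_le: "A n + B n + C n \<le> e n" for n .
  have "(\<lambda>n. e n - C n) \<longlonglongrightarrow> 0 - 0"
    using assms(3) remainder_negligible[OF assms(1)] unfolding C_def r_def by (rule tendsto_diff)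
  then have upper: "(\<lambda>n. e n - C n) \<longlonglongrightarrow> 0" by simp
  have "A n \<le> e n - C n" "B n \<le> e n - C n" for n
    using sum_le[of n] A_nonneg[of n] B_nonneg[of n] by linarith+
  then have "A \<longlonglongrightarrow> 0" "B \<longlonglongrightarrow> 0"
    using A_nonneg B_nonneg by (auto intro!: tendsto_sandwich[OF _ _ tendsto_const upper] always_eventually)
  then show "(\<lambda>n. (LINT x|PX. quantile_term (\<theta> n) x) / (maxnorm2 (\<theta> n - th0))\<^sup>2) \<longlonglongrightarrow> 0"
    and "(\<lambda>n. (LINT x|PX. es_term (\<theta> n) x) / (maxnorm2 (\<theta> n - th0))\<^sup>2) \<longlonglongrightarrow> 0"
    unfolding A_def B_def r_def by auto
qed

lemma shrinking_pairing_not_small: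
  assumes "shrinking \<theta>" and small: "\<And>n. pairing (\<theta> n) \<le> e n * (maxnorm2 (\<theta> n - th0))\<^sup>2"
    and "e \<longlonglongrightarrow> 0"
  shows False
proof -
  define r where "r n = maxnorm2 (\<theta> n - th0)" for n
  have r_pos: "0 < r n" for n using assms by (auto simp: shrinking_def r_def)
  define W where "W n = (1 / r n) *\<^sub>R (\<theta> n - th0)" for n
  have W_maxnorm2: "maxnorm2 (W n) = 1" for n
    using r_pos[of n] by (simp add: W_def maxnorm2_scaleR r_def)
  have "norm (W n) \<le> 2 * real CARD('k)" for n
    using norm_le_card_maxnorm2[of "W n"] W_maxnorm2[of n] by simp
  then have "bounded (range W)" by (intro boundedI) auto
  then obtain l \<sigma> where \<sigma>: "strict_mono \<sigma>" and W_lim: "(W \<circ> \<sigma>) \<longlonglongrightarrow> l"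
    using bounded_imp_convergent_subsequence by blast
  have "1 \<le> norm (W n)" for n
    using maxnorm2_le_norm[of "W n"] W_maxnorm2[of n] by simp
  then have "1 \<le> norm l"
    using W_lim by (intro tendsto_lowerbound[OF tendsto_norm] always_eventually) auto
  have shrinking_\<sigma>: "shrinking (\<theta> \<circ> \<sigma>)" by (rule shrinking_subseq[OF assms(1) \<sigma>])
  note parts = normalized_parts_tendsto_0[OF shrinking_\<sigma>, of "e \<circ> \<sigma>"]
  have "fst l = 0"
  proof (rule fst_direction_eq_0[OF shrinking_\<sigma>])
    show "(\<lambda>n. (1 / maxnorm2 ((\<theta> \<circ> \<sigma>) n - th0)) *\<^sub>R (fst ((\<theta> \<circ> \<sigma>) n) - fst th0)) \<longlonglongrightarrow> fst l"
      using tendsto_fst[OF W_lim] by (simp add: W_def r_def o_def)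
    show "(\<lambda>n. (LINT x|PX. quantile_term ((\<theta> \<circ> \<sigma>) n) x) / (maxnorm2 ((\<theta> \<circ> \<sigma>) n - th0))\<^sup>2) \<longlonglongrightarrow> 0"
      using parts(1) small LIMSEQ_subseq_LIMSEQ[OF assms(3) \<sigma>] by simp
  qed
  moreover have "snd l = 0"
  proof (rule snd_direction_eq_0[OF shrinking_\<sigma>])
    show "(\<lambda>n. (1 / maxnorm2 ((\<theta> \<circ> \<sigma>) n - th0)) *\<^sub>R (snd ((\<theta> \<circ> \<sigma>) n) - snd th0)) \<longlonglongrightarrow> snd l"
      using tendsto_snd[OF W_lim] by (simp add: W_def r_def o_def)
    show "(\<lambda>n. (LINT x|PX. es_term ((\<theta> \<circ> \<sigma>) n) x) / (maxnorm2 ((\<theta> \<circ> \<sigma>) n - th0))\<^sup>2) \<longlonglongrightarrow> 0"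
      using parts(2) small LIMSEQ_subseq_LIMSEQ[OF assms(3) \<sigma>] by simp
  qed
  ultimately have "l = 0" by (simp add: prod_eq_iff)
  with \<open>1 \<le> norm l\<close> show False by simp
qed

lemma pairing_quadratic_lower_bound:
  "\<exists>c>0. \<exists>d>0. \<forall>\<theta>\<in>U. maxnorm2 (\<theta> - th0) \<le> d \<longrightarrow> c * (maxnorm2 (\<theta> - th0))\<^sup>2 \<le> pairing \<theta>"
proof (rule ccontr)
  assume "\<not> ?thesis"
  then have "\<forall>n. \<exists>\<theta>\<in>U. maxnorm2 (\<theta> - th0) \<le> 1 / Suc n \<and> pairing \<theta> < 1 / Suc n * (maxnorm2 (\<theta> - th0))\<^sup>2"
    by (metis (no_types, lifting) not_le of_nat_0_less_iff zero_less_Suc zero_less_divide_1_iff)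
  then obtain \<theta> where \<theta>: "\<And>n. \<theta> n \<in> U" "\<And>n. maxnorm2 (\<theta> n - th0) \<le> 1 / Suc n"
    and small: "\<And>n. pairing (\<theta> n) < 1 / Suc n * (maxnorm2 (\<theta> n - th0))\<^sup>2"
    by metis
  have "0 < maxnorm2 (\<theta> n - th0)" for n
  proof (rule ccontr)
    assume "\<not> 0 < maxnorm2 (\<theta> n - th0)"
    then have "maxnorm2 (\<theta> n - th0) = 0" using maxnorm2_nonneg[of "\<theta> n - th0"] by simp
    then show False using abs_pairing_le[of "\<theta> n"] small[of n] by simp
  qed
  moreover have "(\<lambda>n. maxnorm2 (\<theta> n - th0)) \<longlonglongrightarrow> 0"
    using \<theta>(2) maxnorm2_nonneg[of "\<theta> _ - th0"]
    by (intro tendsto_sandwich[OF _ _ tendsto_const LIMSEQ_inverse_real_of_nat] always_eventually)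
      (auto simp: divide_inverse)
  ultimately have "shrinking \<theta>" using \<theta>(1) by (simp add: shrinking_def)
  moreover have "(\<lambda>n. 1 / real (Suc n)) \<longlonglongrightarrow> 0"
    using LIMSEQ_inverse_real_of_nat by (simp add: divide_inverse)
  ultimately show False
    using small by (intro shrinking_pairing_not_small[of \<theta> "\<lambda>n. 1 / real (Suc n)"]) (auto intro: less_imp_le)
qed

lemma psi_mean_lower_bound:
  "\<exists>a>0. \<exists>d>0. \<forall>\<theta>\<in>U. maxnorm2 (\<theta> - th0) \<le> d \<longrightarrow>
     a * maxnorm2 (\<theta> - th0) \<le> maxnorm2 (psi1_mean \<theta>, psi2_mean \<theta>)"
proof -
  obtain c d where "c > 0" "d > 0"
    and lower: "\<And>\<theta>. \<theta> \<in> U \<Longrightarrow> maxnorm2 (\<theta> - th0) \<le> d \<Longrightarrow> c * (maxnorm2 (\<theta> - th0))\<^sup>2 \<le> pairing \<theta>"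
    using pairing_quadratic_lower_bound by blast
  define K where "K = 2 * real CARD('k)"
  have "K > 0" by (simp add: K_def)
  have "c / K * maxnorm2 (\<theta> - th0) \<le> maxnorm2 (psi1_mean \<theta>, psi2_mean \<theta>)"
    if "\<theta> \<in> U" "maxnorm2 (\<theta> - th0) \<le> d" for \<theta>
  proof (cases "maxnorm2 (\<theta> - th0) = 0")
    case False
    then have r: "0 < maxnorm2 (\<theta> - th0)" using maxnorm2_nonneg[of "\<theta> - th0"] by simp
    have "maxnorm2 (\<theta> - th0) * (c * maxnorm2 (\<theta> - th0)) \<le> maxnorm2 (\<theta> - th0) * (K * maxnorm2 (psi1_mean \<theta>, psi2_mean \<theta>))"
      using lower[OF that] abs_pairing_le[of \<theta>] by (simp add: K_def power2_eq_square mult_ac)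
    then have "c * maxnorm2 (\<theta> - th0) \<le> K * maxnorm2 (psi1_mean \<theta>, psi2_mean \<theta>)"
      using r by simp
    then show ?thesis using \<open>K > 0\<close> by (simp add: field_simps)
  qed (simp add: maxnorm2_nonneg)
  then show ?thesis using \<open>c > 0\<close> \<open>d > 0\<close> \<open>K > 0\<close> by (intro exI[of _ "c / K"] exI[of _ d]) auto
qed

end

theorem lemma3:
  fixes M :: "'a measure"
    and X :: "'a \<Rightarrow> real^'k" and Y :: "'a \<Rightarrow> real"
    and f :: "real^'k \<Rightarrow> real \<Rightarrow> real"
    and \<alpha> :: real
    and Th :: "((real^'k) \<times> (real^'k)) set" and th0 :: "(real^'k) \<times> (real^'k)"
    and G1 G1d G1dd cG2 G2 G2d G2dd a_fn :: "real \<Rightarrow> real"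
    and d0 :: real
  assumes alpha: "0 < \<alpha>" "\<alpha> < 1"
    and prob: "prob_space M" and complete: "complete_measure M"
    and rvX: "X \<in> borel_measurable M" and rvY: "Y \<in> borel_measurable M"
    \<comment> \<open>parameter space and model (M)\<close>
    and Th: "compact Th" "interior Th \<noteq> {}" "th0 \<in> Th"
    and dens: "is_cond_density M X Y f"
    and model: "AE x in distr M borel X.
                  quantile (cond_cdf f x) \<alpha> = x \<bullet> fst th0 \<and>
                  expected_shortfall (cond_cdf f x) \<alpha> = x \<bullet> snd th0"
    \<comment> \<open>(A-1)\<close>
    and second_mom: "AE x in distr M borel X. integrable lborel (\<lambda>y. y\<^sup>2 * f x y)"
    and dens_loc: "AE x in distr M borel X. \<exists>\<epsilon>>0.
                  (\<forall>y\<in>ball (x \<bullet> fst th0) \<epsilon>. 0 < f x y) \<and>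
                  continuous_on (ball (x \<bullet> fst th0) \<epsilon>) (f x) \<and>
                  bounded (f x ` ball (x \<bullet> fst th0) \<epsilon>)"
    \<comment> \<open>(A-2)\<close>
    and XX_int: "\<forall>i j. integrable M (\<lambda>\<omega>. X \<omega> $ i * X \<omega> $ j)"
    and XX_pd: "pos_def (\<chi> i j. LINT \<omega>|M. X \<omega> $ i * X \<omega> $ j)"
    \<comment> \<open>(A-3)\<close>
    and G1_d1: "\<forall>z. (G1 has_real_derivative G1d z) (at z)"
    and G1_d2: "\<forall>z. (G1d has_real_derivative G1dd z) (at z)"
    and G1_cont: "continuous_on UNIV G1dd"
    and G1_mono: "mono G1"
    and G1_int: "integrable M (\<lambda>\<omega>. G1 (Y \<omega>))"
    and G2_d1: "\<forall>z. (cG2 has_real_derivative G2 z) (at z)"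
    and G2_d2: "\<forall>z. (G2 has_real_derivative G2d z) (at z)"
    and G2_d3: "\<forall>z. (G2d has_real_derivative G2dd z) (at z)"
    and G2_cont: "continuous_on UNIV G2dd"
    and G2_pos: "\<forall>z. 0 < G2 z" and G2d_pos: "\<forall>z. 0 < G2d z"
    and a_int: "integrable M (\<lambda>\<omega>. a_fn (Y \<omega>))"
    \<comment> \<open>moment conditions\<close>
    and d0: "0 < d0"
    and m1: "integrable M (\<lambda>\<omega>. maxnorm (X \<omega>) ^ 3
              * (SUP \<tau>\<in>Ubar Th d0 th0. G1d (X \<omega> \<bullet> fst \<tau>))
              * (SUP \<tau>\<in>Ubar Th d0 th0. G1dd (X \<omega> \<bullet> fst \<tau>)))"
    and m2: "integrable M (\<lambda>\<omega>. maxnorm (X \<omega>) ^ 3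
              * (SUP \<tau>\<in>Ubar Th d0 th0. G1d (X \<omega> \<bullet> fst \<tau>))
              * (SUP \<tau>\<in>Ubar Th d0 th0. G2d (X \<omega> \<bullet> snd \<tau>)))"
    and m3: "integrable M (\<lambda>\<omega>. maxnorm (X \<omega>) ^ 3
              * (SUP \<tau>\<in>Ubar Th d0 th0. G2 (X \<omega> \<bullet> snd \<tau>))
              * (SUP \<tau>\<in>Ubar Th d0 th0. G1dd (X \<omega> \<bullet> fst \<tau>)))"
    and m4: "integrable M (\<lambda>\<omega>. maxnorm (X \<omega>) ^ 3
              * (SUP \<tau>\<in>Ubar Th d0 th0. G2 (X \<omega> \<bullet> snd \<tau>))
              * (SUP \<tau>\<in>Ubar Th d0 th0. G2d (X \<omega> \<bullet> snd \<tau>)))"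
    and m5: "integrable M (\<lambda>\<omega>. maxnorm (X \<omega>) ^ 3
              * (SUP \<tau>\<in>Ubar Th d0 th0. (G1d (X \<omega> \<bullet> fst \<tau>))\<^sup>2))"
    and m6: "integrable M (\<lambda>\<omega>. maxnorm (X \<omega>) ^ 3
              * (SUP \<tau>\<in>Ubar Th d0 th0. (G2 (X \<omega> \<bullet> snd \<tau>))\<^sup>2))"
    and m7: "integrable M (\<lambda>\<omega>. maxnorm (X \<omega>) ^ 3
              * (SUP \<tau>\<in>Ubar Th d0 th0. G1d (X \<omega> \<bullet> fst \<tau>) * G2 (X \<omega> \<bullet> snd \<tau>)))"
    and m8: "integrable M (\<lambda>\<omega>. maxnorm (X \<omega>) ^ 5
              * (SUP \<tau>\<in>Ubar Th d0 th0. G2d (X \<omega> \<bullet> snd \<tau>))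
              * (SUP \<tau>\<in>Ubar Th d0 th0. G2dd (X \<omega> \<bullet> snd \<tau>)))"
    and m9: "integrable M (\<lambda>\<omega>. maxnorm (X \<omega>) ^ 5
              * (SUP \<tau>\<in>Ubar Th d0 th0. G2d (X \<omega> \<bullet> snd \<tau>))\<^sup>2)"
    and m10: "integrable M (\<lambda>\<omega>. maxnorm (X \<omega>) ^ 4
              * (SUP \<tau>\<in>Ubar Th d0 th0. G2d (X \<omega> \<bullet> snd \<tau>))
              * (SUP \<tau>\<in>Ubar Th d0 th0. G2dd (X \<omega> \<bullet> snd \<tau>))
              * (LINT y|lborel. \<bar>y\<bar> * f (X \<omega>) y))"
    and m11: "\<forall>th\<in>Ubar Th d0 th0. integrable M (\<lambda>\<omega>. maxnorm (X \<omega>) ^ 3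
              * G2d (X \<omega> \<bullet> snd th)
              * (SUP \<tau>\<in>Ubar Th d0 th0. G2d (X \<omega> \<bullet> snd \<tau>))
              * (LINT y|lborel. \<bar>y\<bar> * f (X \<omega>) y))"
    and m12: "\<forall>th\<in>Ubar Th d0 th0. integrable M (\<lambda>\<omega>. maxnorm (X \<omega>) ^ 3
              * G2d (X \<omega> \<bullet> snd th)
              * (SUP \<tau>\<in>Ubar Th d0 th0. G2dd (X \<omega> \<bullet> snd \<tau>))
              * (LINT y|lborel. y\<^sup>2 * f (X \<omega>) y))"
    and m13: "integrable M (\<lambda>\<omega>. maxnorm (X \<omega>) ^ 3
              * (SUP \<tau>\<in>Ubar Th d0 th0. G2d (X \<omega> \<bullet> snd \<tau>))
              * (SUP \<tau>\<in>Ubar Th d0 th0. G2dd (X \<omega> \<bullet> snd \<tau>))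
              * (LINT y|lborel. y\<^sup>2 * f (X \<omega>) y))"
  shows "\<exists>a>0. \<exists>d>0. \<forall>th\<in>Th. maxnorm2 (th - th0) \<le> d \<longrightarrow>
           a * maxnorm2 (th - th0) \<le>
           maxnorm2 ((LINT \<omega>|M. psi1 \<alpha> G1d G2 (Y \<omega>) (X \<omega>) th),
                     (LINT \<omega>|M. psi2 \<alpha> G2d (Y \<omega>) (X \<omega>) th))"
proof -
  have density: "AE x in distr M borel X. isCont (f x) (x \<bullet> fst th0) \<and> 0 < f x (x \<bullet> fst th0)"
    using dens_loc by eventually_elim (auto simp: continuous_on_eq_continuous_at)
  have "0 \<le> G1d z" for z
    using G1_mono G1_d1 by (intro mono_on_imp_deriv_nonneg[of UNIV G1]) auto
  moreover have "continuous_on UNIV G1d" "continuous_on UNIV G2" "continuous_on UNIV G2d"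
    using G1_d2 G2_d2 G2_d3 by (auto intro!: continuous_at_imp_continuous_on DERIV_isCont)
  moreover have "th0 \<in> Ubar Th d0 th0"
    using Th(3) d0 by (simp add: Ubar_def maxnorm2_def)
  moreover have "bounded (Ubar Th d0 th0)"
    using compact_imp_bounded[OF Th(1)] by (rule bounded_subset) (auto simp: Ubar_def)
  ultimately interpret es_regression M X Y f \<alpha> th0 "Ubar Th d0 th0" G1d G2 G2d
    by (intro es_regression.intro cond_density.intro es_regression_axioms.intro)
      (use assms density in auto)
  obtain a d where "a > 0" "d > 0" and lower: "\<And>\<theta>. \<theta> \<in> Ubar Th d0 th0 \<Longrightarrow> maxnorm2 (\<theta> - th0) \<le> d \<Longrightarrow>
      a * maxnorm2 (\<theta> - th0) \<le> maxnorm2 (psi1_mean \<theta>, psi2_mean \<theta>)"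
    using psi_mean_lower_bound by blast
  have "a * maxnorm2 (\<theta> - th0) \<le> maxnorm2 (psi1_mean \<theta>, psi2_mean \<theta>)"
    if "\<theta> \<in> Th" and "maxnorm2 (\<theta> - th0) \<le> min d d0" for \<theta>
    using lower[of \<theta>] that by (simp add: Ubar_def)
  then show ?thesis
    using \<open>a > 0\<close> \<open>d > 0\<close> d0 unfolding psi1_mean_def psi2_mean_def
    by (intro exI[of _ a] conjI exI[of _ "min d d0"] ballI impI) auto
qed

end
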